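(* Let $(R,\mathfrak m,k)$ be an Artinian local ring of prime characteristic $p$ with $\mathfrak m^p=0$, and let $M$ be an $R$-module of finite length and infinite projective dimension. Then for each $r\ge 1$, $$\lim_{s\to\infty}\frac{\ell_R(\operatorname{Tor}^R_s(M,{}^{\phi^r}\!R))}{\ell_R(\operatorname{Tor}^R_s(M,k))}=\ell_R(R)<\infty,$$ where $\ell_R$ denotes length.
   Context: $\phi:R\to R$ denotes the Frobenius homomorphism $\phi(a)=a^p$. For $r\ge 1$, ${}^{\phi^r}\!R$ denotes the ring $R$ regarded as an $R$-module via $\phi^r$, i.e. $a\cdot b=a^{p^r}b$ for $a\in R$, $b\in {}^{\phi^r}\!R$. *)

theory Defs
  imports Complex_Main "HOL-Library.Extended_Nat" "HOL-Computational_Algebra.Primes" "HOL-Library.Function_Algebras"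
begin

definition is_submod :: "'v \<Rightarrow> ('v \<Rightarrow> 'v \<Rightarrow> 'v) \<Rightarrow> ('a \<Rightarrow> 'v \<Rightarrow> 'v) \<Rightarrow> 'v set \<Rightarrow> bool" where
  "is_submod z add sc S \<longleftrightarrow> z \<in> S \<and> (\<forall>x\<in>S. \<forall>y\<in>S. add x y \<in> S) \<and> (\<forall>c. \<forall>x\<in>S. sc c x \<in> S)"

text \<open>Length of the subquotient B/A: supremum of the lengths n of strict chains
  A = C 0 < C 1 < ... < C n = B of submodules (infinite if unbounded).\<close>
definition len :: "'v \<Rightarrow> ('v \<Rightarrow> 'v \<Rightarrow> 'v) \<Rightarrow> ('a \<Rightarrow> 'v \<Rightarrow> 'v) \<Rightarrow> 'v set \<Rightarrow> 'v set \<Rightarrow> enat" where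
  "len z add sc A B = Sup {enat n | n. \<exists>C. C 0 = A \<and> C n = B \<and>
      (\<forall>i\<le>n. is_submod z add sc (C i)) \<and> (\<forall>i<n. C i \<subset> C (Suc i))}"

definition mod_length :: "('a \<Rightarrow> 'v::ab_group_add \<Rightarrow> 'v) \<Rightarrow> enat" where
  "mod_length sc = len 0 (+) sc {0} UNIV"

definition is_ideal :: "'a::comm_ring_1 set \<Rightarrow> bool" where
  "is_ideal I \<longleftrightarrow> is_submod 0 (+) (*) I"

definition maxideal :: "'a::comm_ring_1 set" where
  "maxideal = {x. \<not> x dvd 1}"

text \<open>Local ring: nontrivial, and the non-units form an ideal (the unique maximal ideal).\<close>
definition local_ring :: "'a::comm_ring_1 itself \<Rightarrow> bool" where
  "local_ring _ \<longleftrightarrow> (0::'a) \<noteq> 1 \<and> is_ideal (maxideal :: 'a set)"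

definition artinian :: "'a::comm_ring_1 itself \<Rightarrow> bool" where
  "artinian _ \<longleftrightarrow> \<not> (\<exists>I :: nat \<Rightarrow> 'a set. \<forall>n. is_ideal (I n) \<and> I (Suc n) \<subset> I n)"

definition vecs :: "nat \<Rightarrow> (nat \<Rightarrow> 'v::zero) set" where
  "vecs b = {x. \<forall>j\<ge>b. x j = 0}"

definition mv :: "('a \<Rightarrow> 'v \<Rightarrow> 'v) \<Rightarrow> (nat \<Rightarrow> nat \<Rightarrow> 'a) \<Rightarrow> nat \<Rightarrow> nat \<Rightarrow> (nat \<Rightarrow> 'v::comm_monoid_add) \<Rightarrow> nat \<Rightarrow> 'v" where
  "mv act D m n x = (\<lambda>j. if j < m then (\<Sum>k<n. act (D j k) (x k)) else 0)"

definition lin :: "('a \<Rightarrow> 'm \<Rightarrow> 'm) \<Rightarrow> (nat \<Rightarrow> 'm) \<Rightarrow> nat \<Rightarrow> (nat \<Rightarrow> 'a) \<Rightarrow> 'm::comm_monoid_add" where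
  "lin smul g n x = (\<Sum>k<n. smul (x k) (g k))"

text \<open>Projective resolution by finitely generated projective modules
  P i = image of the idempotent matrix E i on R^(b i) (i.e. direct summands of finite free modules),
  differentials P i \<rightarrow> P (i-1) given by the matrices D i, augmentation P 0 \<rightarrow> M given by g.\<close>
definition proj_res :: "('a::comm_ring_1 \<Rightarrow> 'm::ab_group_add \<Rightarrow> 'm) \<Rightarrow> (nat \<Rightarrow> 'm) \<Rightarrow> (nat \<Rightarrow> nat)
    \<Rightarrow> (nat \<Rightarrow> nat \<Rightarrow> nat \<Rightarrow> 'a) \<Rightarrow> (nat \<Rightarrow> nat \<Rightarrow> nat \<Rightarrow> 'a) \<Rightarrow> bool" where
  "proj_res smul g b E D \<longleftrightarrow>
     (let P = (\<lambda>i. mv (*) (E i) (b i) (b i) ` vecs (b i)) in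
       (\<forall>i. \<forall>x\<in>vecs (b i). mv (*) (E i) (b i) (b i) (mv (*) (E i) (b i) (b i) x) = mv (*) (E i) (b i) (b i) x)
     \<and> lin smul g (b 0) ` P 0 = UNIV
     \<and> {x \<in> P 0. lin smul g (b 0) x = 0} = mv (*) (D 1) (b 0) (b 1) ` P 1
     \<and> (\<forall>i\<ge>1. {x \<in> P i. mv (*) (D i) (b (i - 1)) (b i) x = 0}
                 = mv (*) (D (Suc i)) (b i) (b (Suc i)) ` P (Suc i)))"

definition idm :: "nat \<Rightarrow> nat \<Rightarrow> nat \<Rightarrow> 'a::comm_ring_1" where
  "idm i j k = (if j = k then 1 else 0)"

definition free_res :: "('a::comm_ring_1 \<Rightarrow> 'm::ab_group_add \<Rightarrow> 'm) \<Rightarrow> (nat \<Rightarrow> 'm) \<Rightarrow> (nat \<Rightarrow> nat)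
    \<Rightarrow> (nat \<Rightarrow> nat \<Rightarrow> nat \<Rightarrow> 'a) \<Rightarrow> bool" where
  "free_res smul g b D \<longleftrightarrow> proj_res smul g b idm D"

definition finite_pd :: "('a::comm_ring_1 \<Rightarrow> 'm::ab_group_add \<Rightarrow> 'm) \<Rightarrow> bool" where
  "finite_pd smul \<longleftrightarrow> (\<exists>g b E D n. proj_res smul g b E D \<and>
      (\<forall>i>n. mv (*) (E i) (b i) (b i) ` vecs (b i) = {0}))"

text \<open>Length of Tor_s(M,N), computed as the homology of F \<otimes>_R N for a (chosen) finite free
  resolution F of M.  F_i \<otimes>_R N = N^(b i), the tensor product using the action act of R on N;
  the length is measured with respect to the R-module structure sc on N
  (act = sc for an ordinary module; for the Frobenius twist they differ).\<close>
definition tor_len :: "('a::comm_ring_1 \<Rightarrow> 'm::ab_group_add \<Rightarrow> 'm) \<Rightarrow> ('a \<Rightarrow> 'n::ab_group_add \<Rightarrow> 'n)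
    \<Rightarrow> ('a \<Rightarrow> 'n \<Rightarrow> 'n) \<Rightarrow> nat \<Rightarrow> enat" where
  "tor_len smul act sc s =
    (let (g, b, D) = (SOME (g, b, D). free_res smul g b D);
         Z = {y \<in> (vecs (b s) :: (nat \<Rightarrow> 'n) set). s = 0 \<or> mv act (D s) (b (s - 1)) (b s) y = 0};
         B = mv act (D (Suc s)) (b s) (b (Suc s)) ` vecs (b (Suc s))
     in len (\<lambda>_. 0) (\<lambda>x y j. x j + y j) (\<lambda>c x j. sc c (x j)) B Z)"

text \<open>Frobenius twist: action of a on the module {}^{\<phi>^r}R, namely a \<cdot> b = a^(p^r) b.\<close>
definition frob_act :: "nat \<Rightarrow> nat \<Rightarrow> 'a::comm_ring_1 \<Rightarrow> 'a \<Rightarrow> 'a" where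
  "frob_act p r a x = a ^ (p ^ r) * x"

end

theory Submission
  imports Defs "HOL-Combinatorics.Transposition"
begin

text \<open>Tor is computed from a free resolution F of M by finite free modules of ranks b s. Over the
  local ring R, invertible row and column operations bring the differential D s to a pivot form:
  an identity block of size a s, zeros beside it, and entries in the maximal ideal elsewhere. If R
  acts on N through the residue field k, the tensored complex is then a direct sum of copies of N,
  and the length of its homology in degree s is (b s - a s - a (s + 1)) times the length of N.
  This applies to N = k and, since m^p = 0 kills the p^r-th powers of all a in m, to the Frobenius
  twist of R, whose length is that of R (finite, as R is Artinian with m^p = 0). The ratio is
  therefore the length of R as soon as h = b s - a s - a (s + 1) is positive. If h = 0, the image
  of D (s + 1) has full rank modulo m in the coordinate block beside the pivots of D s, so by
  Nakayama's lemma it fills that block; then D s vanishes there and F truncates to a finite free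
  resolution, contradicting the infinite projective dimension of M.\<close>

section \<open>Length of subquotients\<close>

lemma is_submod_iff_subspace: "module sc \<Longrightarrow> is_submod 0 (+) sc S \<longleftrightarrow> module.subspace sc S"
  by (simp add: is_submod_def module.subspace_def)

lemma enat_Sup_add_le:
  fixes X Y :: "enat set"
  assumes "X \<noteq> {}" "Y \<noteq> {}" "\<And>x y. x \<in> X \<Longrightarrow> y \<in> Y \<Longrightarrow> x + y \<le> z"
  shows "Sup X + Sup Y \<le> z"
proof (cases z)
  case (enat N)
  obtain x0 y0 where xy: "x0 \<in> X" "y0 \<in> Y" using assms by blast
  have "x \<le> z" if "x \<in> X" for x
    using assms(3)[OF that xy(2)] by (metis add.right_neutral add_left_mono order_trans zero_le)
  hence fx: "finite X" using enat finite_enat_bounded by blast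
  have "y \<le> z" if "y \<in> Y" for y
    using assms(3)[OF xy(1) that] by (metis add.left_neutral add_right_mono order_trans zero_le)
  hence fy: "finite Y" using enat finite_enat_bounded by blast
  have "Sup X = Max X" "Sup Y = Max Y" using fx fy assms(1,2) by (simp_all add: Sup_enat_def)
  moreover have "Max X \<in> X" "Max Y \<in> Y" using fx fy assms(1,2) by simp_all
  ultimately show ?thesis using assms(3) by simp
qed simp

definition subspace_chain ::
    "('a::comm_ring_1 \<Rightarrow> 'b::ab_group_add \<Rightarrow> 'b) \<Rightarrow> 'b set \<Rightarrow> 'b set \<Rightarrow> nat \<Rightarrow> (nat \<Rightarrow> 'b set) \<Rightarrow> bool"
  where "subspace_chain sc A B n C \<longleftrightarrow>
     C 0 = A \<and> C n = B \<and> (\<forall>i\<le>n. module.subspace sc (C i)) \<and> (\<forall>i<n. C i \<subset> C (Suc i))"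

lemma subspace_chain_step: "subspace_chain sc A B n C \<Longrightarrow> i < n \<Longrightarrow> C i \<subset> C (Suc i)"
  by (simp add: subspace_chain_def)

context module
begin

lemma len_eq_Sup_chains: "len 0 (+) scale A B = Sup {enat n | n. \<exists>C. subspace_chain scale A B n C}"
  unfolding len_def subspace_chain_def by (simp add: is_submod_iff_subspace[OF module_axioms])

lemma len_ge_chain: "subspace_chain scale A B n C \<Longrightarrow> enat n \<le> len 0 (+) scale A B"
  unfolding len_eq_Sup_chains by (rule Sup_upper) blast

lemma len_le_chainsI: "(\<And>n C. subspace_chain scale A B n C \<Longrightarrow> enat n \<le> x) \<Longrightarrow> len 0 (+) scale A B \<le> x"
  unfolding len_eq_Sup_chains by (rule Sup_least) blast

lemma subspace_chain_mono:
  assumes "subspace_chain scale A B n C" "i \<le> j" "j \<le> n"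
  shows "C i \<subseteq> C j"
  using assms(2,3)
proof (induction j rule: dec_induct)
  case (step k)
  hence "C k \<subset> C (Suc k)" using assms(1) by (simp add: subspace_chain_def)
  with step show ?case by auto
qed simp

lemma subspace_chain_exists:
  assumes "subspace A" "subspace B" "A \<subseteq> B"
  shows "\<exists>n C. subspace_chain scale A B n C"
proof (cases "A = B")
  case True
  thus ?thesis using assms by (intro exI[of _ 0] exI[of _ "\<lambda>_. A"]) (simp add: subspace_chain_def)
next
  case False
  thus ?thesis using assms
    by (intro exI[of _ 1] exI[of _ "\<lambda>i. if i = 0 then A else B"]) (auto simp: subspace_chain_def le_Suc_eq)
qed

lemma len_refl: "len 0 (+) scale A A = 0"
proof -
  have "n = 0" if c: "subspace_chain scale A A n C" for n C
  proof (rule ccontr)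
    assume "n \<noteq> 0"
    hence "C 0 \<subset> C 1" "C 1 \<subseteq> C n" using c subspace_chain_mono[OF c, of 1 n] by (auto simp: subspace_chain_def)
    thus False using c by (auto simp: subspace_chain_def)
  qed
  hence "len 0 (+) scale A A \<le> 0" by (intro len_le_chainsI) (simp add: zero_enat_def)
  thus ?thesis by simp
qed

lemma len_ge_1:
  assumes "subspace A" "subspace B" "A \<subset> B"
  shows "1 \<le> len 0 (+) scale A B"
  using len_ge_chain[of A B 1 "\<lambda>i. if i = 0 then A else B"] assms
  by (auto simp: subspace_chain_def le_Suc_eq one_enat_def)

lemma len_le_1I:
  assumes "\<And>E. subspace E \<Longrightarrow> A \<subset> E \<Longrightarrow> E \<subseteq> C \<Longrightarrow> E = C"
  shows "len 0 (+) scale A C \<le> 1"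
proof (rule len_le_chainsI)
  fix n Ch assume c: "subspace_chain scale A C n Ch"
  show "enat n \<le> 1"
  proof (rule ccontr)
    assume "\<not> enat n \<le> 1"
    hence n: "2 \<le> n" by (simp add: one_enat_def)
    have "Ch 0 \<subset> Ch 1" "Ch 1 \<subset> Ch 2" "subspace (Ch 1)" "Ch 0 = A"
      using c n by (auto simp: subspace_chain_def numeral_2_eq_2)
    moreover have "Ch 2 \<subseteq> C" using subspace_chain_mono[OF c, of 2 n] c n by (simp add: subspace_chain_def)
    ultimately show False using assms[of "Ch 1"] by auto
  qed
qed

lemma subspace_chain_of_increasing:
  assumes "\<forall>i\<le>n. subspace (C i)" "\<forall>i<n. C i \<subseteq> C (Suc i)"
  shows "\<exists>C'. subspace_chain scale (C 0) (C n) (card {i. i < n \<and> C i \<noteq> C (Suc i)}) C'"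
  using assms
proof (induction n)
  case 0
  show ?case using 0 by (intro exI[of _ "\<lambda>_. C 0"]) (simp add: subspace_chain_def)
next
  case (Suc n)
  let ?k = "card {i. i < n \<and> C i \<noteq> C (Suc i)}"
  obtain C' where c: "subspace_chain scale (C 0) (C n) ?k C'" using Suc by auto
  show ?case
  proof (cases "C n = C (Suc n)")
    case True
    hence "{i. i < Suc n \<and> C i \<noteq> C (Suc i)} = {i. i < n \<and> C i \<noteq> C (Suc i)}" using less_Suc_eq by auto
    with c True show ?thesis by auto
  next
    case False
    hence "{i. i < Suc n \<and> C i \<noteq> C (Suc i)} = insert n {i. i < n \<and> C i \<noteq> C (Suc i)}"
      using less_Suc_eq by auto
    hence card: "card {i. i < Suc n \<and> C i \<noteq> C (Suc i)} = Suc ?k" by simp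
    have "C n \<subset> C (Suc n)" using False Suc.prems by auto
    hence "subspace_chain scale (C 0) (C (Suc n)) (Suc ?k) (C'(Suc ?k := C (Suc n)))"
      using c Suc.prems by (auto simp: subspace_chain_def le_Suc_eq less_Suc_eq)
    thus ?thesis using card by metis
  qed
qed

lemma subspace_chain_append:
  assumes c1: "subspace_chain scale A B n1 C1" and c2: "subspace_chain scale B C n2 C2"
  shows "subspace_chain scale A C (n1 + n2) (\<lambda>i. if i \<le> n1 then C1 i else C2 (i - n1))"
  unfolding subspace_chain_def
proof (intro conjI allI impI)
  fix i assume i: "i < n1 + n2"
  show "(if i \<le> n1 then C1 i else C2 (i - n1)) \<subset> (if Suc i \<le> n1 then C1 (Suc i) else C2 (Suc i - n1))"
  proof (cases "i < n1")
    case False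
    hence "Suc i - n1 = Suc (i - n1)" by simp
    thus ?thesis using c1 c2 i False by (auto simp: subspace_chain_def)
  qed (use c1 in \<open>auto simp: subspace_chain_def\<close>)
qed (use c1 c2 in \<open>auto simp: subspace_chain_def\<close>)

lemma subspace_plus:
  assumes "subspace X" "subspace B"
  shows "subspace {x + b |x b. x \<in> X \<and> b \<in> B}"
proof (rule subspaceI)
  show "0 \<in> {x + b |x b. x \<in> X \<and> b \<in> B}" using assms by (force intro: subspace_0)
next
  fix u v assume "u \<in> {x + b |x b. x \<in> X \<and> b \<in> B}" "v \<in> {x + b |x b. x \<in> X \<and> b \<in> B}"
  then obtain x b x' b' where "u = x + b" "v = x' + b'" "x \<in> X" "b \<in> B" "x' \<in> X" "b' \<in> B" by auto
  thus "u + v \<in> {x + b |x b. x \<in> X \<and> b \<in> B}"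
    using assms by (intro CollectI exI[of _ "x + x'"] exI[of _ "b + b'"]) (simp add: subspace_add algebra_simps)
next
  fix c u assume "u \<in> {x + b |x b. x \<in> X \<and> b \<in> B}"
  then obtain x b where "u = x + b" "x \<in> X" "b \<in> B" by auto
  thus "c *s u \<in> {x + b |x b. x \<in> X \<and> b \<in> B}"
    using assms by (intro CollectI exI[of _ "c *s x"] exI[of _ "c *s b"]) (simp add: subspace_scale scale_right_distrib)
qed

lemma plus_subspace_eq_right:
  assumes "subspace X" "subspace B" "X \<subseteq> B"
  shows "{x + b |x b. x \<in> X \<and> b \<in> B} = B"
proof
  show "{x + b |x b. x \<in> X \<and> b \<in> B} \<subseteq> B" using assms by (auto intro: subspace_add)
  show "B \<subseteq> {x + b |x b. x \<in> X \<and> b \<in> B}" using subspace_0[OF assms(1)] by force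
qed

lemma plus_subspace_eq_left:
  assumes "subspace X" "subspace B" "B \<subseteq> X"
  shows "{x + b |x b. x \<in> X \<and> b \<in> B} = X"
proof
  show "{x + b |x b. x \<in> X \<and> b \<in> B} \<subseteq> X" using assms by (auto intro: subspace_add)
  show "X \<subseteq> {x + b |x b. x \<in> X \<and> b \<in> B}" using subspace_0[OF assms(2)] by force
qed

lemma subspace_eq_if_inter_plus_eq:
  assumes "subspace X" "subspace Y" "subspace B" "X \<subseteq> Y"
    and "X \<inter> B = Y \<inter> B" and "{x + b |x b. x \<in> X \<and> b \<in> B} = {y + b |y b. y \<in> Y \<and> b \<in> B}"
  shows "X = Y"
proof
  show "Y \<subseteq> X"
  proof
    fix y assume y: "y \<in> Y"
    have "y \<in> {y + b |y b. y \<in> Y \<and> b \<in> B}" using y assms(3) by (force intro: subspace_0)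
    then obtain x b where xb: "y = x + b" "x \<in> X" "b \<in> B" using assms(6) by blast
    have "y - x \<in> Y" using subspace_diff[OF assms(2) y] xb(2) assms(4) by blast
    hence "b \<in> Y \<inter> B" using xb by simp
    hence "b \<in> X" using assms(5) by blast
    thus "y \<in> X" using xb assms(1) by (simp add: subspace_add)
  qed
qed (rule assms(4))

lemma card_steps_le_traces:
  assumes sCh: "\<And>i. i \<le> n \<Longrightarrow> subspace (Ch i)" and strict: "\<And>i. i < n \<Longrightarrow> Ch i \<subset> Ch (Suc i)"
    and sB: "subspace B"
  shows "n \<le> card {i. i < n \<and> Ch i \<inter> B \<noteq> Ch (Suc i) \<inter> B} +
    card {i. i < n \<and> {x + b |x b. x \<in> Ch i \<and> b \<in> B} \<noteq> {x + b |x b. x \<in> Ch (Suc i) \<and> b \<in> B}}"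
    (is "n \<le> card ?K1 + card ?K2")
proof -
  have "{..<n} \<subseteq> ?K1 \<union> ?K2"
  proof
    fix i assume "i \<in> {..<n}"
    hence i: "i < n" by simp
    show "i \<in> ?K1 \<union> ?K2"
    proof (rule ccontr)
      assume "i \<notin> ?K1 \<union> ?K2"
      hence "Ch i \<inter> B = Ch (Suc i) \<inter> B"
        "{x + b |x b. x \<in> Ch i \<and> b \<in> B} = {x + b |x b. x \<in> Ch (Suc i) \<and> b \<in> B}"
        using i by auto
      moreover have "i \<le> n" "Suc i \<le> n" "Ch i \<subseteq> Ch (Suc i)" using i strict[OF i] by auto
      ultimately have "Ch i = Ch (Suc i)"
        using subspace_eq_if_inter_plus_eq[OF sCh[OF \<open>i \<le> n\<close>] sCh[OF \<open>Suc i \<le> n\<close>] sB] by simp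
      thus False using strict[OF i] by simp
    qed
  qed
  hence "n \<le> card (?K1 \<union> ?K2)" using card_mono[of "?K1 \<union> ?K2" "{..<n}"] by simp
  also have "\<dots> \<le> card ?K1 + card ?K2" by (rule card_Un_le)
  finally show ?thesis .
qed

lemma len_le_add:
  assumes sA: "subspace A" and sB: "subspace B" and sC: "subspace C" and AB: "A \<subseteq> B" and BC: "B \<subseteq> C"
  shows "len 0 (+) scale A C \<le> len 0 (+) scale A B + len 0 (+) scale B C"
proof (rule len_le_chainsI)
  fix n Ch assume ch: "subspace_chain scale A C n Ch"
  define I where "I i = Ch i \<inter> B" for i
  define P where "P i = {x + b |x b. x \<in> Ch i \<and> b \<in> B}" for i
  have sCh: "subspace (Ch i)" if "i \<le> n" for i using ch that by (simp add: subspace_chain_def)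
  have mono: "Ch i \<subseteq> Ch (Suc i)" if "i < n" for i using subspace_chain_step[OF ch that] by blast
  have sI: "\<forall>i\<le>n. subspace (I i)" and sP: "\<forall>i\<le>n. subspace (P i)"
    using sCh sB by (simp_all add: I_def P_def subspace_inter subspace_plus)
  have monoI: "\<forall>i<n. I i \<subseteq> I (Suc i)" using mono unfolding I_def by auto
  have monoP: "\<forall>i<n. P i \<subseteq> P (Suc i)"
  proof (intro allI impI subsetI)
    fix i u assume i: "i < n" and "u \<in> P i"
    then obtain x b where "u = x + b" "x \<in> Ch i" "b \<in> B" unfolding P_def by blast
    thus "u \<in> P (Suc i)" using mono[OF i] unfolding P_def by blast
  qed
  have "Ch 0 = A" "Ch n = C" using ch by (simp_all add: subspace_chain_def)
  hence ends: "I 0 = A" "I n = B" "P 0 = B" "P n = C"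
    using AB BC plus_subspace_eq_right[OF sA sB AB] plus_subspace_eq_left[OF sC sB BC]
    by (auto simp: I_def P_def)
  obtain C1 where "subspace_chain scale A B (card {i. i < n \<and> I i \<noteq> I (Suc i)}) C1"
    using subspace_chain_of_increasing[OF sI monoI] ends by auto
  moreover obtain C2 where "subspace_chain scale B C (card {i. i < n \<and> P i \<noteq> P (Suc i)}) C2"
    using subspace_chain_of_increasing[OF sP monoP] ends by auto
  ultimately have "enat (card {i. i < n \<and> I i \<noteq> I (Suc i)}) + enat (card {i. i < n \<and> P i \<noteq> P (Suc i)})
      \<le> len 0 (+) scale A B + len 0 (+) scale B C"
    by (intro add_mono len_ge_chain)
  moreover have "n \<le> card {i. i < n \<and> I i \<noteq> I (Suc i)} + card {i. i < n \<and> P i \<noteq> P (Suc i)}"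
    unfolding I_def P_def by (rule card_steps_le_traces[where n = n and Ch = Ch, OF sCh subspace_chain_step[OF ch] sB])
  ultimately show "enat n \<le> len 0 (+) scale A B + len 0 (+) scale B C"
    by (simp add: order_trans[rotated])
qed

lemma len_add:
  assumes "subspace A" "subspace B" "subspace C" "A \<subseteq> B" "B \<subseteq> C"
  shows "len 0 (+) scale A C = len 0 (+) scale A B + len 0 (+) scale B C"
proof (rule antisym)
  show "len 0 (+) scale A C \<le> len 0 (+) scale A B + len 0 (+) scale B C" by (rule len_le_add[OF assms])
  show "len 0 (+) scale A B + len 0 (+) scale B C \<le> len 0 (+) scale A C"
    unfolding len_eq_Sup_chains[of A B] len_eq_Sup_chains[of B C]
  proof (rule enat_Sup_add_le)
    show "{enat n |n. \<exists>C'. subspace_chain scale A B n C'} \<noteq> {}"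
      using subspace_chain_exists[OF assms(1,2,4)] by auto
    show "{enat n |n. \<exists>C'. subspace_chain scale B C n C'} \<noteq> {}"
      using subspace_chain_exists[OF assms(2,3,5)] by auto
  next
    fix x y assume "x \<in> {enat n |n. \<exists>C'. subspace_chain scale A B n C'}"
      "y \<in> {enat n |n. \<exists>C'. subspace_chain scale B C n C'}"
    thus "x + y \<le> len 0 (+) scale A C" using len_ge_chain[OF subspace_chain_append] by fastforce
  qed
qed

lemma len_mono:
  assumes "subspace A" "subspace B" "subspace C" "A \<subseteq> B" "B \<subseteq> C"
  shows "len 0 (+) scale A B \<le> len 0 (+) scale A C"
  using len_add[OF assms] by simp

lemma eq_if_len_eq:
  assumes "subspace A" "subspace B" "subspace C" "A \<subseteq> B" "B \<subseteq> C"
    and "len 0 (+) scale A C = len 0 (+) scale A B" "len 0 (+) scale A C \<noteq> \<infinity>"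
  shows "B = C"
proof (rule ccontr)
  assume "B \<noteq> C"
  hence "1 \<le> len 0 (+) scale B C" using len_ge_1 assms(2,3,5) by blast
  thus False using len_add[OF assms(1-5)] assms(6,7)
    by (cases "len 0 (+) scale B C"; cases "len 0 (+) scale A B") (auto simp: one_enat_def)
qed

end

context module_hom
begin

lemma mem_if_eq_image:
  assumes "m1.subspace B" "m1.subspace C" "A \<subseteq> C" "C \<subseteq> B"
    and ker: "\<And>x. x \<in> B \<Longrightarrow> f x = 0 \<Longrightarrow> x \<in> A"
    and "x \<in> B" "c \<in> C" "f x = f c"
  shows "x \<in> C"
proof -
  have "x - c \<in> A" using assms by (intro ker) (auto intro: m1.subspace_diff simp: diff)
  hence "(x - c) + c \<in> C" using assms by (intro m1.subspace_add) auto
  thus ?thesis by simp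
qed

lemma subspace_chain_image:
  assumes c: "subspace_chain s1 A B n C" and sB: "m1.subspace B"
    and ker: "\<And>x. x \<in> B \<Longrightarrow> f x = 0 \<Longrightarrow> x \<in> A"
  shows "subspace_chain s2 (f ` A) (f ` B) n (\<lambda>i. f ` C i)"
proof -
  have sC: "m1.subspace (C i)" and AC: "A \<subseteq> C i" and CB: "C i \<subseteq> B" if "i \<le> n" for i
    using c that m1.subspace_chain_mono[OF c, of 0 i] m1.subspace_chain_mono[OF c, of i n]
    by (auto simp: subspace_chain_def)
  have "f ` C i \<subset> f ` C (Suc i)" if i: "i < n" for i
  proof -
    obtain x where x: "x \<in> C (Suc i)" "x \<notin> C i" using subspace_chain_step[OF c i] by blast
    have "f x \<notin> f ` C i"
      using x mem_if_eq_image[OF sB sC AC CB ker] CB[of "Suc i"] i by fastforce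
    moreover have "C i \<subseteq> C (Suc i)" using subspace_chain_step[OF c i] by blast
    ultimately show ?thesis using x by blast
  qed
  thus ?thesis using c sC by (auto simp: subspace_chain_def subspace_image)
qed

lemma subspace_chain_vimage:
  assumes d: "subspace_chain s2 (f ` A) (f ` B) n D"
    and sA: "m1.subspace A" and sB: "m1.subspace B" and AB: "A \<subseteq> B"
    and ker: "\<And>x. x \<in> B \<Longrightarrow> f x = 0 \<Longrightarrow> x \<in> A"
  shows "subspace_chain s1 A B n (\<lambda>i. {x \<in> B. f x \<in> D i})"
proof -
  have sD: "m2.subspace (D i)" and DB: "D i \<subseteq> f ` B" if "i \<le> n" for i
    using d that m2.subspace_chain_mono[OF d, of i n] by (auto simp: subspace_chain_def)
  have "{x \<in> B. f x \<in> D 0} = A"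
    using d AB mem_if_eq_image[OF sB sA order_refl AB ker] by (auto simp: subspace_chain_def)
  moreover have "{x \<in> B. f x \<in> D n} = B" using d by (auto simp: subspace_chain_def)
  moreover have "m1.subspace {x \<in> B. f x \<in> D i}" if "i \<le> n" for i
    using m1.subspace_inter[OF sB subspace_vimage[OF sD[OF that]]] by (simp add: Int_def vimage_def)
  moreover have "{x \<in> B. f x \<in> D i} \<subset> {x \<in> B. f x \<in> D (Suc i)}" if i: "i < n" for i
  proof -
    obtain y where y: "y \<in> D (Suc i)" "y \<notin> D i" using subspace_chain_step[OF d i] by blast
    moreover obtain x where "x \<in> B" "y = f x" using DB[of "Suc i"] y i by auto
    moreover have "D i \<subseteq> D (Suc i)" using subspace_chain_step[OF d i] by blast
    ultimately show ?thesis by blast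
  qed
  ultimately show ?thesis by (simp add: subspace_chain_def)
qed

lemma len_image:
  assumes "m1.subspace A" "m1.subspace B" "A \<subseteq> B" "\<And>x. x \<in> B \<Longrightarrow> f x = 0 \<Longrightarrow> x \<in> A"
  shows "len 0 (+) s2 (f ` A) (f ` B) = len 0 (+) s1 A B"
proof (rule antisym)
  show "len 0 (+) s2 (f ` A) (f ` B) \<le> len 0 (+) s1 A B"
    using subspace_chain_vimage[OF _ assms] by (blast intro: m2.len_le_chainsI m1.len_ge_chain)
  show "len 0 (+) s1 A B \<le> len 0 (+) s2 (f ` A) (f ` B)"
    using subspace_chain_image[OF _ assms(2,4)] by (blast intro: m1.len_le_chainsI m2.len_ge_chain)
qed

end

lemma (in module_hom) len_kernel_add_len_image:
  assumes "m1.subspace V"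
  shows "len 0 (+) s1 {0} {x \<in> V. f x = 0} + len 0 (+) s2 {0} (f ` V) = len 0 (+) s1 {0} V"
proof -
  let ?Z = "{x \<in> V. f x = 0}"
  have Z: "m1.subspace ?Z" using m1.subspace_inter[OF assms subspace_kernel] by (simp add: Int_def)
  have "f ` ?Z = {0}" using m1.subspace_0[OF Z] by force
  hence "len 0 (+) s2 {0} (f ` V) = len 0 (+) s1 ?Z V" using len_image[OF Z assms] by auto
  moreover have "len 0 (+) s1 {0} V = len 0 (+) s1 {0} ?Z + len 0 (+) s1 ?Z V"
    using m1.subspace_0[OF Z] by (intro m1.len_add[OF m1.subspace_single_0 Z assms]) auto
  ultimately show ?thesis by simp
qed

section \<open>Coordinate vectors and matrices\<close>

lemma module_mult: "module ((*) :: 'a::comm_ring_1 \<Rightarrow> 'a \<Rightarrow> 'a)"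
  by standard (simp_all add: algebra_simps)

definition vec_scale :: "('a \<Rightarrow> 'v \<Rightarrow> 'v) \<Rightarrow> 'a \<Rightarrow> ('i \<Rightarrow> 'v) \<Rightarrow> 'i \<Rightarrow> 'v" where
  "vec_scale sc c x = (\<lambda>j. sc c (x j))"

lemma module_vec_scale: "module sc \<Longrightarrow> module (vec_scale sc)"
  unfolding module_def by (auto simp: fun_eq_iff vec_scale_def)

definition supp_vecs :: "nat set \<Rightarrow> (nat \<Rightarrow> 'v::zero) set" where
  "supp_vecs I = {x. \<forall>j. j \<notin> I \<longrightarrow> x j = 0}"

lemma supp_vecs_empty: "supp_vecs {} = {0}"
  by (auto simp: supp_vecs_def fun_eq_iff)

lemma vecs_eq_supp_vecs: "vecs n = supp_vecs {..<n}"
  by (auto simp: vecs_def supp_vecs_def)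

lemma vecs_0: "vecs 0 = {0}"
  by (auto simp: vecs_def fun_eq_iff)

lemma subspace_supp_vecs: "module sc \<Longrightarrow> module.subspace (vec_scale sc) (supp_vecs I)"
  by (auto simp: module.subspace_def module_vec_scale supp_vecs_def vec_scale_def module.scale_zero_right)

lemma subspace_vecs: "module sc \<Longrightarrow> module.subspace (vec_scale sc) (vecs n)"
  by (simp add: vecs_eq_supp_vecs subspace_supp_vecs)

lemma len_supp_vecs_insert:
  assumes sc: "module sc" and "j \<notin> I"
  shows "len 0 (+) (vec_scale sc) (supp_vecs I) (supp_vecs (insert j I)) = len 0 (+) sc {0} UNIV"
proof -
  interpret coord: module_hom "vec_scale sc" sc "\<lambda>x. x j"
    by (simp add: module_hom_iff module_vec_scale sc vec_scale_def)
  have "len 0 (+) (vec_scale sc) (supp_vecs I) (supp_vecs (insert j I))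
      = len 0 (+) sc ((\<lambda>x. x j) ` supp_vecs I) ((\<lambda>x. x j) ` supp_vecs (insert j I))"
    by (rule coord.len_image[OF subspace_supp_vecs subspace_supp_vecs, symmetric])
       (auto simp: sc supp_vecs_def)
  also have "(\<lambda>x. x j) ` supp_vecs I = {0}"
    using assms by (auto simp: supp_vecs_def intro!: image_eqI[of _ _ 0])
  also have "(\<lambda>x. x j) ` supp_vecs (insert j I) = UNIV"
    by (auto simp: supp_vecs_def intro!: image_eqI[of _ _ "\<lambda>l. if l = j then _ else 0"])
  finally show ?thesis .
qed

lemma len_supp_vecs:
  assumes sc: "module sc" and "finite I"
  shows "len 0 (+) (vec_scale sc) {0} (supp_vecs I) = of_nat (card I) * len 0 (+) sc {0} UNIV"
  using assms(2)
proof (induction I rule: finite_induct)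
  case empty
  show ?case unfolding supp_vecs_empty card.empty of_nat_0 mult_zero_left
    by (rule module.len_refl[OF module_vec_scale[OF sc]])
next
  case (insert j I)
  interpret vec: module "vec_scale sc" by (rule module_vec_scale[OF sc])
  have "len 0 (+) (vec_scale sc) {0} (supp_vecs (insert j I))
      = len 0 (+) (vec_scale sc) {0} (supp_vecs I) + len 0 (+) (vec_scale sc) (supp_vecs I) (supp_vecs (insert j I))"
    by (rule vec.len_add[OF vec.subspace_single_0 subspace_supp_vecs[OF sc] subspace_supp_vecs[OF sc]])
       (auto simp: supp_vecs_def)
  also have "\<dots> = of_nat (card I) * len 0 (+) sc {0} UNIV + len 0 (+) sc {0} UNIV"
    by (simp only: insert.IH len_supp_vecs_insert[OF sc insert(2)])
  also have "\<dots> = of_nat (card (insert j I)) * len 0 (+) sc {0} UNIV"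
    using insert by (simp add: algebra_simps)
  finally show ?case .
qed

definition one_mat :: "nat \<Rightarrow> nat \<Rightarrow> 'a::comm_ring_1" where
  "one_mat i k = (if i = k then 1 else 0)"

definition mat_mult :: "nat \<Rightarrow> (nat \<Rightarrow> nat \<Rightarrow> 'a::comm_ring_1) \<Rightarrow> (nat \<Rightarrow> nat \<Rightarrow> 'a) \<Rightarrow> nat \<Rightarrow> nat \<Rightarrow> 'a" where
  "mat_mult n A B = (\<lambda>i k. \<Sum>l<n. A i l * B l k)"

definition mat_eq_on :: "nat \<Rightarrow> nat \<Rightarrow> (nat \<Rightarrow> nat \<Rightarrow> 'a) \<Rightarrow> (nat \<Rightarrow> nat \<Rightarrow> 'a) \<Rightarrow> bool" where
  "mat_eq_on m n A B \<longleftrightarrow> (\<forall>i<m. \<forall>j<n. A i j = B i j)"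

definition mat_inv_pair :: "nat \<Rightarrow> (nat \<Rightarrow> nat \<Rightarrow> 'a::comm_ring_1) \<Rightarrow> (nat \<Rightarrow> nat \<Rightarrow> 'a) \<Rightarrow> bool" where
  "mat_inv_pair n U Ui \<longleftrightarrow> mat_eq_on n n (mat_mult n U Ui) one_mat \<and> mat_eq_on n n (mat_mult n Ui U) one_mat"

lemma idm_eq_one_mat: "idm i = one_mat"
  by (simp add: fun_eq_iff idm_def one_mat_def)

lemma sum_one_mat_left: "i < n \<Longrightarrow> (\<Sum>l<n. one_mat i l * f l) = (f i :: 'a::comm_ring_1)"
  by (simp add: one_mat_def if_distrib[of "\<lambda>x. x * _"] cong: if_cong)

lemma sum_one_mat_right: "k < n \<Longrightarrow> (\<Sum>l<n. f l * one_mat l k) = (f k :: 'a::comm_ring_1)"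
  by (simp add: one_mat_def if_distrib[of "\<lambda>x. _ * x"] cong: if_cong)

lemma mat_mult_assoc: "mat_mult n (mat_mult m A B) C = mat_mult m A (mat_mult n B C)"
proof (intro ext)
  fix i k
  have "mat_mult n (mat_mult m A B) C i k = (\<Sum>l<n. \<Sum>l'<m. A i l' * (B l' l * C l k))"
    by (simp add: mat_mult_def sum_distrib_right mult.assoc)
  also have "\<dots> = (\<Sum>l'<m. \<Sum>l<n. A i l' * (B l' l * C l k))" by (rule sum.swap)
  also have "\<dots> = mat_mult m A (mat_mult n B C) i k" by (simp add: mat_mult_def sum_distrib_left)
  finally show "mat_mult n (mat_mult m A B) C i k = mat_mult m A (mat_mult n B C) i k" .
qed

lemma mat_mult_one_left: "i < n \<Longrightarrow> mat_mult n one_mat B i k = B i k"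
  by (simp add: mat_mult_def sum_one_mat_left)

lemma mat_mult_one_right: "k < n \<Longrightarrow> mat_mult n A one_mat i k = A i k"
  by (simp add: mat_mult_def sum_one_mat_right)

lemma mat_mult_cong_right: "(\<And>l. l < n \<Longrightarrow> X l k = Y l k) \<Longrightarrow> mat_mult n A X i k = mat_mult n A Y i k"
  unfolding mat_mult_def by simp

lemma mat_mult_cong_left: "(\<And>l. l < n \<Longrightarrow> X i l = Y i l) \<Longrightarrow> mat_mult n X B i k = mat_mult n Y B i k"
  unfolding mat_mult_def by simp

lemma mat_inv_pair_sym: "mat_inv_pair n U Ui \<Longrightarrow> mat_inv_pair n Ui U"
  unfolding mat_inv_pair_def by simp

lemma mat_inv_pair_one: "mat_inv_pair n one_mat one_mat"
  unfolding mat_inv_pair_def mat_eq_on_def by (simp add: mat_mult_one_left)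

lemma mat_mult_inv_pair_cancel:
  assumes "mat_inv_pair n A Ai" "i < n"
  shows "mat_mult n A (mat_mult n Ai B) i k = B i k"
proof -
  have "mat_mult n A (mat_mult n Ai B) i k = mat_mult n (mat_mult n A Ai) B i k"
    by (simp add: mat_mult_assoc)
  also have "\<dots> = mat_mult n one_mat B i k"
    by (rule mat_mult_cong_left) (use assms in \<open>auto simp: mat_inv_pair_def mat_eq_on_def\<close>)
  finally show ?thesis using assms by (simp add: mat_mult_one_left)
qed

lemma mat_inv_pair_mult:
  assumes "mat_inv_pair n A Ai" and "mat_inv_pair n B Bi"
  shows "mat_inv_pair n (mat_mult n A B) (mat_mult n Bi Ai)"
proof -
  have one_side: "mat_eq_on n n (mat_mult n (mat_mult n A B) (mat_mult n Bi Ai)) one_mat"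
    if invA: "mat_inv_pair n A Ai" and invB: "mat_inv_pair n B Bi" for A Ai B Bi :: "nat \<Rightarrow> nat \<Rightarrow> 'a"
  proof -
    have "mat_mult n (mat_mult n A B) (mat_mult n Bi Ai) i k = one_mat i k" if ik: "i < n" "k < n" for i k
    proof -
      have "mat_mult n (mat_mult n A B) (mat_mult n Bi Ai) i k = mat_mult n A (mat_mult n B (mat_mult n Bi Ai)) i k"
        by (simp add: mat_mult_assoc)
      also have "\<dots> = mat_mult n A Ai i k"
        by (rule mat_mult_cong_right) (simp add: mat_mult_inv_pair_cancel[OF invB])
      finally show ?thesis using invA ik by (simp add: mat_inv_pair_def mat_eq_on_def)
    qed
    thus ?thesis by (simp add: mat_eq_on_def)
  qed
  show ?thesis
    using one_side[OF assms] one_side[OF mat_inv_pair_sym[OF assms(2)] mat_inv_pair_sym[OF assms(1)]]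
    by (simp add: mat_inv_pair_def)
qed

lemma mv_in_vecs: "mv act D m n x \<in> vecs m"
  by (simp add: mv_def vecs_def)

lemma mv_mat_mult:
  assumes "module act"
  shows "mv act (mat_mult n A B) m p x = mv act A m n (mv act B n p x)"
proof -
  interpret module act by (rule assms)
  have "(\<Sum>k<p. act (\<Sum>l<n. A j l * B l k) (x k)) = (\<Sum>l<n. act (A j l) (\<Sum>k<p. act (B l k) (x k)))" for j
  proof -
    have "(\<Sum>k<p. act (\<Sum>l<n. A j l * B l k) (x k)) = (\<Sum>k<p. \<Sum>l<n. act (A j l) (act (B l k) (x k)))"
      by (simp add: scale_sum_left)
    also have "\<dots> = (\<Sum>l<n. \<Sum>k<p. act (A j l) (act (B l k) (x k)))" by (rule sum.swap)
    also have "\<dots> = (\<Sum>l<n. act (A j l) (\<Sum>k<p. act (B l k) (x k)))" by (simp add: scale_sum_right)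
    finally show ?thesis .
  qed
  thus ?thesis by (simp add: mv_def mat_mult_def fun_eq_iff)
qed

lemma mv_one_mat:
  assumes "module act" and "x \<in> vecs n"
  shows "mv act one_mat n n x = x"
proof -
  interpret module act by (rule assms(1))
  have "(\<Sum>k<n. act (one_mat j k) (x k)) = x j" if "j < n" for j
    using that by (simp add: one_mat_def if_distrib[of "\<lambda>c. act c _"] cong: if_cong)
  thus ?thesis using assms(2) by (auto simp: mv_def vecs_def fun_eq_iff)
qed

lemma mv_cong: "mat_eq_on m n A B \<Longrightarrow> mv act A m n x = mv act B m n x"
  by (simp add: mv_def mat_eq_on_def fun_eq_iff)

lemma mv_zero_mat: "module act \<Longrightarrow> mv act (\<lambda>_ _. 0) m n x = 0"
  by (simp add: mv_def fun_eq_iff module.scale_zero_left)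

lemma module_hom_mv:
  assumes "module act" "module sc" "\<And>a c v. act a (sc c v) = sc c (act a v)"
  shows "module_hom (vec_scale sc) (vec_scale sc) (mv act D m n)"
  using assms
  by (auto simp: module_hom_iff module_vec_scale mv_def vec_scale_def fun_eq_iff sum.distrib
      module.scale_right_distrib module.scale_sum_right module.scale_zero_right)

lemma module_hom_mv_self: "module act \<Longrightarrow> module_hom (vec_scale act) (vec_scale act) (mv act D m n)"
  by (rule module_hom_mv) (simp_all add: module.scale_left_commute)

lemma mv_zero: "module act \<Longrightarrow> mv act D m n 0 = 0"
  using module_hom.zero[OF module_hom_mv_self] .

lemma mv_vecs_le:
  assumes "module act" "x \<in> vecs a" "a \<le> n"
  shows "mv act A m a x = mv act A m n x"
proof -
  have sums: "(\<Sum>k<n. act (A j k) (x k)) = (\<Sum>k<a. act (A j k) (x k))" for j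
    using assms by (intro sum.mono_neutral_right) (auto simp: vecs_def module.scale_zero_right)
  show ?thesis unfolding mv_def sums ..
qed

lemma mv_one_mat_col:
  assumes "i < m" "j < n"
  shows "mv (*) A m n (one_mat j) i = (A i j :: 'a::comm_ring_1)"
  using assms by (simp add: mv_def one_mat_def eq_commute[of j] if_distrib[of "\<lambda>x. _ * x"] cong: if_cong)

lemma mat_eq_on_if_mv_eq:
  assumes "\<And>x. x \<in> vecs n \<Longrightarrow> mv (*) A m n x = mv (*) B m n x"
  shows "mat_eq_on m n A (B :: nat \<Rightarrow> nat \<Rightarrow> 'a::comm_ring_1)"
proof -
  have "A i j = B i j" if "i < m" "j < n" for i j
    using assms[of "one_mat j"] that mv_one_mat_col[OF that, of A] mv_one_mat_col[OF that, of B]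
    by (simp add: vecs_def one_mat_def)
  thus ?thesis by (simp add: mat_eq_on_def)
qed

lemma mv_mat_inv_pair:
  assumes "module act" "mat_inv_pair n U Ui" "x \<in> vecs n"
  shows "mv act U n n (mv act Ui n n x) = x"
proof -
  have "mv act U n n (mv act Ui n n x) = mv act (mat_mult n U Ui) n n x" by (simp add: mv_mat_mult[OF assms(1)])
  also have "\<dots> = mv act one_mat n n x" by (rule mv_cong) (use assms(2) in \<open>simp add: mat_inv_pair_def\<close>)
  finally show ?thesis using mv_one_mat[OF assms(1,3)] by simp
qed

lemma mv_mat_inv_pair_image:
  assumes "module act" "mat_inv_pair n V Vi"
  shows "mv act Vi n n ` vecs n = vecs n"
proof
  show "mv act Vi n n ` vecs n \<subseteq> vecs n" using mv_in_vecs by blast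
  show "vecs n \<subseteq> mv act Vi n n ` vecs n"
    using mv_mat_inv_pair[OF assms(1) mat_inv_pair_sym[OF assms(2)]] mv_in_vecs by (metis image_eqI subsetI)
qed

lemma image_mv_idm: "mv (*) (idm i) n n ` vecs n = (vecs n :: (nat \<Rightarrow> 'a::comm_ring_1) set)"
  using mv_one_mat[OF module_mult] by (force simp: idm_eq_one_mat)

lemma subspace_kernel_mv:
  assumes "module act" "module sc" "\<And>a c v. act a (sc c v) = sc c (act a v)"
  shows "module.subspace (vec_scale sc) {x \<in> vecs n. mv act D m n x = 0}"
proof -
  interpret module_hom "vec_scale sc" "vec_scale sc" "mv act D m n" by (rule module_hom_mv[OF assms])
  show ?thesis using m1.subspace_inter[OF subspace_vecs[OF assms(2)] subspace_kernel] by (simp add: Int_def)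
qed

lemma len_image_mv_inv_pair:
  assumes "module act" and hom: "module_hom (vec_scale sc) (vec_scale sc) (mv act Ui m m)"
    and "mat_inv_pair m U Ui" and X: "module.subspace (vec_scale sc) X" "X \<subseteq> vecs m"
  shows "len 0 (+) (vec_scale sc) {0} (mv act Ui m m ` X) = len 0 (+) (vec_scale sc) {0} X"
proof -
  interpret module_hom "vec_scale sc" "vec_scale sc" "mv act Ui m m" by (rule hom)
  have "x \<in> {0}" if "x \<in> X" "mv act Ui m m x = 0" for x
    using mv_mat_inv_pair[OF assms(1,3), of x] that X(2) mv_zero[OF assms(1)] by auto
  hence "len 0 (+) (vec_scale sc) (mv act Ui m m ` {0}) (mv act Ui m m ` X) = len 0 (+) (vec_scale sc) {0} X"
    using X(1) m1.subspace_0 by (intro len_image) auto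
  thus ?thesis by simp
qed

section \<open>Normal form of matrices over a local ring\<close>

definition leading_identity :: "nat \<Rightarrow> nat \<Rightarrow> nat \<Rightarrow> (nat \<Rightarrow> nat \<Rightarrow> 'a::comm_ring_1) \<Rightarrow> bool" where
  "leading_identity t m n B \<longleftrightarrow> (\<forall>i<m. \<forall>j<n. i < t \<or> j < t \<longrightarrow> B i j = one_mat i j)"

lemma mv_leading_identity_row:
  assumes "module act" "leading_identity a m n Q" "i < a" "a \<le> m" "a \<le> n"
  shows "mv act Q m n y i = y i"
proof -
  have "(\<Sum>k<n. act (Q i k) (y k)) = (\<Sum>k<n. if k = i then y k else 0)"
    using assms by (intro sum.cong) (auto simp: leading_identity_def one_mat_def module.scale_zero_left module.scale_one)
  thus ?thesis using assms(3-5) by (simp add: mv_def)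
qed

lemma mv_leading_identity_supp_vecs:
  assumes "module act" "leading_identity a m n Q" "a \<le> m" "a \<le> n" "z \<in> supp_vecs {..<a}"
  shows "mv act Q m n z = z"
proof
  fix i
  show "mv act Q m n z i = z i"
  proof (cases "i < a")
    case False
    have "act (Q i k) (z k) = 0" if "i < m" "k < n" for k
    proof (cases "k < a")
      case True
      hence "Q i k = 0" using assms(2) False that by (auto simp: leading_identity_def one_mat_def)
      thus ?thesis by (simp add: module.scale_zero_left[OF assms(1)])
    next
      case False
      hence "z k = 0" using assms(5) by (simp add: supp_vecs_def)
      thus ?thesis by (simp add: module.scale_zero_right[OF assms(1)])
    qed
    hence "(\<Sum>k<n. act (Q i k) (z k)) = 0" if "i < m" using that by simp
    thus ?thesis using False assms(5) by (simp add: mv_def supp_vecs_def)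
  qed (rule mv_leading_identity_row[OF assms(1,2) _ assms(3,4)])
qed

lemma supp_vecs_if_mv_leading_identity_eq_0:
  assumes "module act" "leading_identity a m n Q" "a \<le> m" "a \<le> n"
    and "y \<in> vecs n" "mv act Q m n y = 0"
  shows "y \<in> supp_vecs {a..<n}"
proof -
  have "y i = 0" if "i < a" for i using mv_leading_identity_row[OF assms(1,2) that assms(3,4), of y] assms(6) by simp
  thus ?thesis using assms(5) by (auto simp: supp_vecs_def vecs_def)
qed

definition perm_mat :: "(nat \<Rightarrow> nat) \<Rightarrow> nat \<Rightarrow> nat \<Rightarrow> 'a::comm_ring_1" where
  "perm_mat \<sigma> i k = (if \<sigma> i = k then 1 else 0)"

lemma transpose_less: "a < m \<Longrightarrow> b < m \<Longrightarrow> i < m \<Longrightarrow> Transposition.transpose a b i < m"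
  by (simp add: transpose_def)

lemma mat_mult_perm_mat_left: "\<sigma> i < m \<Longrightarrow> mat_mult m (perm_mat \<sigma>) B i j = B (\<sigma> i) j"
  by (simp add: mat_mult_def perm_mat_def if_distrib[of "\<lambda>x. x * _"] cong: if_cong)

lemma mat_mult_transpose_mat_right:
  assumes "Transposition.transpose a b j < n"
  shows "mat_mult n B (perm_mat (Transposition.transpose a b)) i j = B i (Transposition.transpose a b j)"
proof -
  have P: "perm_mat (Transposition.transpose a b) l j = (if l = Transposition.transpose a b j then 1 else 0)" for l
    by (auto simp: perm_mat_def transpose_def)
  show ?thesis using assms by (simp add: mat_mult_def P if_distrib[of "\<lambda>x. _ * x"] cong: if_cong)
qed

lemma mat_inv_pair_transpose_mat:
  assumes "a < n" "b < n"
  shows "mat_inv_pair n (perm_mat (Transposition.transpose a b)) (perm_mat (Transposition.transpose a b))"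
  using assms
  by (simp add: mat_inv_pair_def mat_eq_on_def mat_mult_perm_mat_left transpose_less perm_mat_def one_mat_def)

lemma leading_identity_swap_pivot:
  assumes B: "leading_identity t m n B" and i0: "t \<le> i0" "i0 < m" and j0: "t \<le> j0" "j0 < n"
  defines "B' \<equiv> mat_mult m (perm_mat (Transposition.transpose t i0))
                  (mat_mult n B (perm_mat (Transposition.transpose t j0)))"
  shows "leading_identity t m n B'" and "B' t t = B i0 j0"
proof -
  let ?r = "Transposition.transpose t i0" and ?c = "Transposition.transpose t j0"
  have B': "B' i j = B (?r i) (?c j)" if "i < m" "j < n" for i j
    using that i0 j0 by (simp add: B'_def mat_mult_perm_mat_left mat_mult_transpose_mat_right transpose_less)
  show "B' t t = B i0 j0" using B' i0 j0 by simp
  have "B' i j = one_mat i j" if ij: "i < m" "j < n" "i < t \<or> j < t" for i j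
  proof -
    have "B (?r i) (?c j) = one_mat (?r i) (?c j)"
      using B ij i0 j0 by (auto simp: leading_identity_def transpose_less)
    also have "\<dots> = one_mat i j"
      using ij i0 j0 by (auto simp: one_mat_def transpose_def)
    finally show ?thesis using B' ij by simp
  qed
  thus "leading_identity t m n B'" by (simp add: leading_identity_def)
qed

definition pivot_col_mat :: "nat \<Rightarrow> 'a \<Rightarrow> (nat \<Rightarrow> 'a) \<Rightarrow> nat \<Rightarrow> nat \<Rightarrow> 'a::comm_ring_1" where
  "pivot_col_mat t d w i k = (if i = t then (if k = t then d else 0) else one_mat i k + (if k = t then w i else 0))"

definition pivot_row_mat :: "nat \<Rightarrow> (nat \<Rightarrow> 'a) \<Rightarrow> nat \<Rightarrow> nat \<Rightarrow> 'a::comm_ring_1" where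
  "pivot_row_mat t w l j = one_mat l j + (if l = t then w j else 0)"

lemma mat_mult_pivot_col_mat:
  assumes "i < m" "t < m"
  shows "mat_mult m (pivot_col_mat t d w) Y i j = (if i = t then d * Y t j else Y i j + w i * Y t j)"
proof -
  have "mat_mult m (pivot_col_mat t d w) Y i j
      = (\<Sum>l<m. (if i = t then (if l = t then d else 0) else one_mat i l + (if l = t then w i else 0)) * Y l j)"
    by (simp add: mat_mult_def pivot_col_mat_def)
  also have "\<dots> = (if i = t then d * Y t j else Y i j + w i * Y t j)"
    using assms by (simp add: distrib_right sum.distrib sum_one_mat_left if_distrib[of "\<lambda>x. x * _"] cong: if_cong)
  finally show ?thesis .
qed

lemma mat_mult_pivot_row_mat:
  assumes "j < n" "t < n"
  shows "mat_mult n Y (pivot_row_mat t w) i j = Y i j + Y i t * w j"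
  using assms by (simp add: mat_mult_def pivot_row_mat_def distrib_left sum.distrib sum_one_mat_right
      if_distrib[of "\<lambda>x. _ * x"] cong: if_cong)

lemma mat_inv_pair_pivot_col_mat:
  assumes "c * u = 1" "t < m"
  shows "mat_inv_pair m (pivot_col_mat t u (\<lambda>i. - (v i * u))) (pivot_col_mat t c v)"
proof -
  have cu: "c * (u * x) = x" "u * (c * x) = x" for x
    using assms(1) by (simp_all add: mult.assoc[symmetric] mult.commute)
  show ?thesis using assms
    by (auto simp: mat_inv_pair_def mat_eq_on_def mat_mult_pivot_col_mat pivot_col_mat_def one_mat_def
        algebra_simps cu)
qed

lemma mat_inv_pair_pivot_row_mat:
  assumes "w t = 0" "t < n"
  shows "mat_inv_pair n (pivot_row_mat t (\<lambda>j. - w j)) (pivot_row_mat t w)"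
  using assms by (auto simp: mat_inv_pair_def mat_eq_on_def mat_mult_pivot_row_mat pivot_row_mat_def one_mat_def)

lemma leading_identity_eliminate:
  fixes B :: "nat \<Rightarrow> nat \<Rightarrow> 'a::comm_ring_1"
  assumes B: "leading_identity t m n B" and t: "t < m" "t < n" and unit: "B t t * u = 1"
  defines "L \<equiv> pivot_col_mat t u (\<lambda>i. - (B i t * u))"
    and "R \<equiv> pivot_row_mat t (\<lambda>j. - (if j = t then 0 else u * B t j))"
  shows "leading_identity (Suc t) m n (mat_mult m L (mat_mult n B R))"
proof -
  define X where "X = mat_mult n B R"
  have X: "X i j = B i j - (if j = t then 0 else B i t * (u * B t j))" if "j < n" for i j
    using that t by (simp add: X_def R_def mat_mult_pivot_row_mat)
  have Xt: "X t j = (if j = t then B t t else 0)" if "j < n" for j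
    using X[OF that, of t] unit by (simp add: mult.assoc[symmetric] mult.commute[of _ u])
  have "mat_mult m L X i j = one_mat i j" if ij: "i < m" "j < n" "i < Suc t \<or> j < Suc t" for i j
  proof (cases "i = t")
    case True
    thus ?thesis using ij t Xt unit
      by (cases "j = t") (simp_all add: L_def mat_mult_pivot_col_mat one_mat_def mult.commute)
  next
    case False
    have LX: "mat_mult m L X i j = X i j - B i t * u * X t j"
      using ij t False by (simp add: L_def mat_mult_pivot_col_mat)
    show ?thesis
    proof (cases "j = t")
      case True
      have "B i t * u * B t t = B i t" using unit by (simp add: mult.assoc mult.commute[of u])
      thus ?thesis using LX X[of t i] Xt[of t] t True False by (simp add: one_mat_def)
    next
      case j: False
      have "B i t * (u * B t j) = 0 \<and> B i j = one_mat i j"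
        using B ij t False j by (auto simp: leading_identity_def one_mat_def)
      thus ?thesis using LX X[OF ij(2), of i] Xt[OF ij(2)] j by simp
    qed
  qed
  thus ?thesis by (simp add: leading_identity_def X_def)
qed

definition pivot_form :: "nat \<Rightarrow> nat \<Rightarrow> nat \<Rightarrow> (nat \<Rightarrow> nat \<Rightarrow> 'a::comm_ring_1) \<Rightarrow> bool" where
  "pivot_form a m n Q \<longleftrightarrow> leading_identity a m n Q \<and> (\<forall>i<m. \<forall>j<n. a \<le> i \<and> a \<le> j \<longrightarrow> Q i j \<in> maxideal)"

text \<open>Over a local ring, a is the rank of D modulo the maximal ideal.\<close>
definition normal_form :: "(nat \<Rightarrow> nat \<Rightarrow> 'a::comm_ring_1) \<Rightarrow> nat \<Rightarrow> nat \<Rightarrow> (nat \<Rightarrow> nat \<Rightarrow> 'a) \<Rightarrow> (nat \<Rightarrow> nat \<Rightarrow> 'a)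
    \<Rightarrow> (nat \<Rightarrow> nat \<Rightarrow> 'a) \<Rightarrow> (nat \<Rightarrow> nat \<Rightarrow> 'a) \<Rightarrow> nat \<Rightarrow> bool" where
  "normal_form D m n U Ui V Vi a \<longleftrightarrow> mat_inv_pair m U Ui \<and> mat_inv_pair n V Vi \<and> a \<le> m \<and> a \<le> n \<and>
     pivot_form a m n (mat_mult m U (mat_mult n D V))"

lemma leading_identity_pivot_step:
  fixes B :: "nat \<Rightarrow> nat \<Rightarrow> 'a::comm_ring_1"
  assumes B: "leading_identity t m n B"
    and ij: "t \<le> i0" "i0 < m" "t \<le> j0" "j0 < n" "B i0 j0 \<notin> maxideal"
  shows "\<exists>L Li R Ri. mat_inv_pair m L Li \<and> mat_inv_pair n R Ri \<and>
    leading_identity (Suc t) m n (mat_mult m L (mat_mult n B R))"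
proof -
  have t: "t < m" "t < n" using ij by auto
  define P where "P = (perm_mat (Transposition.transpose t i0) :: nat \<Rightarrow> nat \<Rightarrow> 'a)"
  define Q where "Q = (perm_mat (Transposition.transpose t j0) :: nat \<Rightarrow> nat \<Rightarrow> 'a)"
  define B' where "B' = mat_mult m P (mat_mult n B Q)"
  have lead: "leading_identity t m n B'" and piv: "B' t t = B i0 j0"
    using leading_identity_swap_pivot[OF B ij(1-4)] by (simp_all add: B'_def P_def Q_def)
  obtain u where u: "B' t t * u = 1" using piv ij(5) by (auto simp: maxideal_def elim: dvdE)
  define L where "L = pivot_col_mat t u (\<lambda>i. - (B' i t * u))"
  define R where "R = pivot_row_mat t (\<lambda>j. - (if j = t then 0 else u * B' t j))"
  define Li where "Li = pivot_col_mat t (B' t t) (\<lambda>i. B' i t)"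
  define Ri where "Ri = pivot_row_mat t (\<lambda>j. if j = t then 0 else u * B' t j)"
  have "mat_inv_pair m L Li" unfolding L_def Li_def by (rule mat_inv_pair_pivot_col_mat[OF u t(1)])
  moreover have "mat_inv_pair m P P" unfolding P_def using ij by (simp add: mat_inv_pair_transpose_mat)
  ultimately have invLP: "mat_inv_pair m (mat_mult m L P) (mat_mult m P Li)" by (rule mat_inv_pair_mult)
  have "mat_inv_pair n Q Q" unfolding Q_def using ij by (simp add: mat_inv_pair_transpose_mat)
  moreover have "mat_inv_pair n R Ri" unfolding R_def Ri_def by (rule mat_inv_pair_pivot_row_mat) (simp_all add: t)
  ultimately have invQR: "mat_inv_pair n (mat_mult n Q R) (mat_mult n Ri Q)" by (rule mat_inv_pair_mult)
  have "leading_identity (Suc t) m n (mat_mult m L (mat_mult n B' R))"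
    unfolding L_def R_def by (rule leading_identity_eliminate[OF lead t u])
  moreover have "mat_mult m L (mat_mult n B' R) = mat_mult m (mat_mult m L P) (mat_mult n B (mat_mult n Q R))"
    by (simp add: B'_def mat_mult_assoc)
  ultimately show ?thesis using invLP invQR by auto
qed

lemma normal_form_exists_from:
  fixes D :: "nat \<Rightarrow> nat \<Rightarrow> 'a::comm_ring_1"
  assumes "t \<le> m" "t \<le> n" "mat_inv_pair m U Ui" "mat_inv_pair n V Vi"
    and "leading_identity t m n (mat_mult m U (mat_mult n D V))"
  shows "\<exists>U Ui V Vi a. normal_form D m n U Ui V Vi a"
  using assms
proof (induction "m - t" arbitrary: t U Ui V Vi rule: less_induct)
  case less
  define B where "B = mat_mult m U (mat_mult n D V)"
  show ?case
  proof (cases "\<exists>i0 j0. t \<le> i0 \<and> i0 < m \<and> t \<le> j0 \<and> j0 < n \<and> B i0 j0 \<notin> maxideal")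
    case False
    hence "normal_form D m n U Ui V Vi t"
      using less.prems by (auto simp: normal_form_def pivot_form_def B_def)
    thus ?thesis by blast
  next
    case True
    then obtain i0 j0 where ij: "t \<le> i0" "i0 < m" "t \<le> j0" "j0 < n" "B i0 j0 \<notin> maxideal" by blast
    then obtain L Li R Ri where LR: "mat_inv_pair m L Li" "mat_inv_pair n R Ri"
      "leading_identity (Suc t) m n (mat_mult m L (mat_mult n B R))"
      using leading_identity_pivot_step[of t m n B] less.prems(5) B_def by blast
    moreover have "mat_mult m L (mat_mult n B R) = mat_mult m (mat_mult m L U) (mat_mult n D (mat_mult n V R))"
      by (simp add: B_def mat_mult_assoc)
    ultimately have "leading_identity (Suc t) m n (mat_mult m (mat_mult m L U) (mat_mult n D (mat_mult n V R)))"
      by simp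
    with ij show ?thesis
      by (intro less.hyps[of "Suc t", OF _ _ _ mat_inv_pair_mult[OF LR(1) less.prems(3)]
            mat_inv_pair_mult[OF less.prems(4) LR(2)]]) auto
  qed
qed

lemma normal_form_exists: "\<exists>U Ui V Vi a. normal_form (D :: nat \<Rightarrow> nat \<Rightarrow> 'a::comm_ring_1) m n U Ui V Vi a"
  by (rule normal_form_exists_from[of 0 m n one_mat one_mat one_mat one_mat])
     (simp_all add: mat_inv_pair_one leading_identity_def)

lemma normal_form_mat_eq:
  assumes "normal_form D m n U Ui V Vi a"
  shows "mat_eq_on m n (mat_mult m Ui (mat_mult n (mat_mult m U (mat_mult n D V)) Vi)) D"
  unfolding mat_eq_on_def
proof (intro allI impI)
  fix i j assume ij: "i < m" "j < n"
  have U: "mat_inv_pair m Ui U" and V: "mat_inv_pair n V Vi"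
    using assms by (auto simp: normal_form_def mat_inv_pair_sym)
  have "mat_mult m Ui (mat_mult n (mat_mult m U (mat_mult n D V)) Vi) i j
      = mat_mult m Ui (mat_mult m U (mat_mult n D (mat_mult n V Vi))) i j"
    by (simp add: mat_mult_assoc)
  also have "\<dots> = mat_mult n D (mat_mult n V Vi) i j" by (rule mat_mult_inv_pair_cancel[OF U ij(1)])
  also have "\<dots> = mat_mult n D one_mat i j"
    by (rule mat_mult_cong_right) (use V ij in \<open>auto simp: mat_inv_pair_def mat_eq_on_def\<close>)
  finally show "mat_mult m Ui (mat_mult n (mat_mult m U (mat_mult n D V)) Vi) i j = D i j"
    using ij by (simp add: mat_mult_one_right)
qed

lemma mv_normal_form:
  assumes "normal_form D m n U Ui V Vi a" and "module act"
  shows "mv act D m n x = mv act Ui m m (mv act (mat_mult m U (mat_mult n D V)) m n (mv act Vi n n x))"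
  using mv_cong[OF normal_form_mat_eq[OF assms(1)], of act x] by (simp add: mv_mat_mult[OF assms(2)])

lemma supp_vecs_subset_image_normal_form:
  assumes nf: "normal_form D m n U Ui V Vi a" and act: "module act"
  shows "mv act Ui m m ` supp_vecs {..<a} \<subseteq> mv act D m n ` vecs n"
proof
  fix w assume "w \<in> mv act Ui m m ` supp_vecs {..<a}"
  then obtain z where z: "z \<in> supp_vecs {..<a}" "w = mv act Ui m m z" by blast
  have a: "a \<le> m" "a \<le> n" and U: "mat_inv_pair m Ui U"
    and Q: "leading_identity a m n (mat_mult m U (mat_mult n D V))"
    using nf by (auto simp: normal_form_def pivot_form_def mat_inv_pair_sym)
  have zeq: "mv act U m m (mv act D m n (mv act V n n z)) = z"
    using mv_leading_identity_supp_vecs[OF act Q a z(1)] by (simp add: mv_mat_mult[OF act])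
  have "mv act Ui m m (mv act U m m (mv act D m n (mv act V n n z))) = mv act D m n (mv act V n n z)"
    by (rule mv_mat_inv_pair[OF act U mv_in_vecs])
  hence "w = mv act D m n (mv act V n n z)" using z(2) zeq by simp
  thus "w \<in> mv act D m n ` vecs n" using mv_in_vecs by blast
qed

lemma kernel_mv_pivot_columns:
  assumes nf: "normal_form D m n U Ui V Vi a"
  shows "{x \<in> vecs a. mv (*) (mat_mult n D V) m a x = 0} = {0 :: nat \<Rightarrow> 'a::comm_ring_1}"
proof (intro equalityI subsetI)
  have mR: "module ((*) :: 'a \<Rightarrow> 'a \<Rightarrow> 'a)" by (rule module_mult)
  have U: "mat_inv_pair m U Ui" and a: "a \<le> m" "a \<le> n"
    and lead: "leading_identity a m n (mat_mult m U (mat_mult n D V))"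
    using nf by (simp_all add: normal_form_def pivot_form_def)
  fix x :: "nat \<Rightarrow> 'a" assume "x \<in> {x \<in> vecs a. mv (*) (mat_mult n D V) m a x = 0}"
  hence x: "x \<in> vecs a" "x \<in> vecs n" "mv (*) (mat_mult n D V) m n x = 0"
    using mv_vecs_le[OF mR _ a(2)] a(2) by (auto simp: vecs_def)
  hence "mv (*) (mat_mult m U (mat_mult n D V)) m n x = 0" by (simp add: mv_mat_mult[OF mR] mv_zero[OF mR])
  hence "x \<in> supp_vecs {a..<n}" by (rule supp_vecs_if_mv_leading_identity_eq_0[OF mR lead a x(2)])
  thus "x \<in> {0}" using x(1) by (auto simp: supp_vecs_def vecs_def fun_eq_iff)
qed (simp add: vecs_def mv_zero[OF module_mult])

lemma image_mv_pivot_columns: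
  fixes D :: "nat \<Rightarrow> nat \<Rightarrow> 'a::comm_ring_1"
  assumes nf: "normal_form D m n U Ui V Vi a"
    and cols: "\<And>i j. i < m \<Longrightarrow> a \<le> j \<Longrightarrow> j < n \<Longrightarrow> mat_mult m U (mat_mult n D V) i j = 0"
  shows "mv (*) (mat_mult n D V) m a ` vecs a = mv (*) D m n ` vecs n"
proof
  define Q where "Q = mat_mult m U (mat_mult n D V)"
  have mR: "module ((*) :: 'a \<Rightarrow> 'a \<Rightarrow> 'a)" by (rule module_mult)
  have U: "mat_inv_pair m Ui U" and a: "a \<le> n"
    using nf by (simp_all add: normal_form_def mat_inv_pair_sym)
  have DV: "mv (*) (mat_mult n D V) m a x = mv (*) D m n (mv (*) V n n x)" if "x \<in> vecs a" for x
    using mv_vecs_le[OF mR that a] by (simp add: mv_mat_mult[OF mR])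
  show "mv (*) (mat_mult n D V) m a ` vecs a \<subseteq> mv (*) D m n ` vecs n"
    using DV mv_in_vecs by (auto intro!: image_eqI)
  show "mv (*) D m n ` vecs n \<subseteq> mv (*) (mat_mult n D V) m a ` vecs a"
  proof
    fix y assume "y \<in> mv (*) D m n ` vecs n"
    then obtain x where y: "y = mv (*) D m n x" by blast
    define w where "w = mv (*) Vi n n x"
    define w' where "w' i = (if i < a then w i else 0)" for i
    have w': "w' \<in> vecs a" by (simp add: w'_def vecs_def)
    have "Q i k * w k = Q i k * w' k" if "i < m" "k < n" for i k
      using cols[of i k] that by (cases "k < a") (simp_all add: w'_def Q_def)
    hence "mv (*) Q m n w = mv (*) Q m n w'" by (auto simp: mv_def intro!: sum.cong)
    moreover have "mv (*) Ui m m (mv (*) Q m n z) = mv (*) D m n (mv (*) V n n z)" for z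
      using mv_mat_inv_pair[OF mR U mv_in_vecs] by (simp add: Q_def mv_mat_mult[OF mR])
    ultimately have "y = mv (*) (mat_mult n D V) m a w'"
      using mv_normal_form[OF nf mR, of x] DV[OF w'] by (simp add: y w_def Q_def)
    thus "y \<in> mv (*) (mat_mult n D V) m a ` vecs a" using w' by blast
  qed
qed

section \<open>Artinian local rings\<close>

lemma is_ideal_iff_subspace: "is_ideal I \<longleftrightarrow> module.subspace (*) I"
  by (simp add: is_ideal_def is_submod_iff_subspace module_mult)

lemma maxideal_mult:
  assumes "local_ring TYPE('a::comm_ring_1)" and "(a::'a) \<in> maxideal"
  shows "b * a \<in> maxideal"
  using assms module.subspace_scale[OF module_mult]
  by (simp add: local_ring_def is_ideal_iff_subspace)

lemma (in module) exists_maximal_subspace_avoiding: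
  assumes "subspace A" "A \<subseteq> C" "x \<notin> A"
  shows "\<exists>D. subspace D \<and> A \<subseteq> D \<and> D \<subseteq> C \<and> x \<notin> D \<and>
    (\<forall>E. subspace E \<longrightarrow> D \<subset> E \<longrightarrow> E \<subseteq> C \<longrightarrow> x \<in> E)"
proof -
  define F where "F = {D. subspace D \<and> A \<subseteq> D \<and> D \<subseteq> C \<and> x \<notin> D}"
  have "\<Union>Ch \<in> F" if ne: "Ch \<noteq> {}" and ch: "subset.chain F Ch" for Ch
  proof -
    have mem: "subspace X" "A \<subseteq> X" "X \<subseteq> C" "x \<notin> X" if "X \<in> Ch" for X
      using ch that by (auto simp: subset_chain_def F_def)
    have cmp: "X \<subseteq> Y \<or> Y \<subseteq> X" if "X \<in> Ch" "Y \<in> Ch" for X Y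
      using ch that by (auto simp: subset_chain_def)
    have "subspace (\<Union>Ch)"
    proof (rule subspaceI)
      show "0 \<in> \<Union>Ch" using ne mem(1) subspace_0 by blast
      show "u + v \<in> \<Union>Ch" if uv: "u \<in> \<Union>Ch" "v \<in> \<Union>Ch" for u v
      proof -
        obtain X Y where XY: "X \<in> Ch" "Y \<in> Ch" "u \<in> X" "v \<in> Y" using uv by blast
        show ?thesis
        proof (cases "X \<subseteq> Y")
          case True thus ?thesis using XY mem(1)[of Y] subspace_add by blast
        next
          case False thus ?thesis using XY cmp mem(1)[of X] subspace_add by blast
        qed
      qed
      show "c *s u \<in> \<Union>Ch" if "u \<in> \<Union>Ch" for c u using that mem(1) subspace_scale by blast
    qed
    moreover have "A \<subseteq> \<Union>Ch" using ne mem(2) by blast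
    moreover have "\<Union>Ch \<subseteq> C" "x \<notin> \<Union>Ch" using mem(3,4) by blast+
    ultimately show ?thesis by (simp add: F_def)
  qed
  moreover have "A \<in> F" using assms by (simp add: F_def)
  ultimately obtain D where D: "D \<in> F" and max: "\<forall>E\<in>F. D \<subseteq> E \<longrightarrow> E = D"
    using subset_Zorn_nonempty[of F] by blast
  have "x \<in> E" if "subspace E" "D \<subset> E" "E \<subseteq> C" for E
    using D max that unfolding F_def by blast
  thus ?thesis using D unfolding F_def by blast
qed

text \<open>Modulo the maximal ideal a maximal subspace avoiding x is a hyperplane: everything
  outside it generates x up to a unit.\<close>
lemma (in module) eq_if_above_maximal_avoiding:
  assumes C: "subspace C" and D: "subspace D" "D \<subseteq> C" "x \<notin> D"
    and max: "\<And>E. subspace E \<Longrightarrow> D \<subset> E \<Longrightarrow> E \<subseteq> C \<Longrightarrow> x \<in> E"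
    and kill: "\<And>a y. a \<in> maxideal \<Longrightarrow> y \<in> C \<Longrightarrow> a *s y \<in> D"
    and E: "subspace E" "D \<subset> E" "E \<subseteq> C"
  shows "E = C"
proof
  show "C \<subseteq> E"
  proof
    fix y assume y: "y \<in> C"
    show "y \<in> E"
    proof (cases "y \<in> D")
      case False
      define D' where "D' = {d + z |d z. d \<in> D \<and> z \<in> span {y}}"
      have "subspace D'" unfolding D'_def by (rule subspace_plus[OF D(1) subspace_span])
      moreover have "D \<subset> D'"
      proof -
        have "d + 0 \<in> D'" if "d \<in> D" for d unfolding D'_def using that span_zero by blast
        moreover have "0 + y \<in> D'" unfolding D'_def using subspace_0[OF D(1)] span_base[of y "{y}"] by blast
        ultimately show ?thesis using False by auto
      qed
      moreover have "D' \<subseteq> C"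
      proof
        fix z assume "z \<in> D'"
        then obtain d r where "z = d + r *s y" "d \<in> D" unfolding D'_def span_singleton by blast
        thus "z \<in> C" using D(2) subspace_add[OF C] subspace_scale[OF C y] by blast
      qed
      ultimately have "x \<in> D'" by (rule max)
      then obtain d r where dr: "x = d + r *s y" "d \<in> D" unfolding D'_def span_singleton by blast
      have "r \<notin> maxideal"
      proof
        assume "r \<in> maxideal"
        hence "d + r *s y \<in> D" using kill[OF _ y] dr(2) subspace_add[OF D(1)] by blast
        thus False using dr D(3) by simp
      qed
      then obtain s where "1 = r * s" by (auto simp: maxideal_def elim: dvdE)
      hence "y = s *s (x - d)" using dr by (simp add: mult.commute)
      moreover have "x - d \<in> E" using max[OF E] E(2) dr(2) subspace_diff[OF E(1)] by blast
      ultimately show ?thesis using subspace_scale[OF E(1)] by simp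
    qed (use E in blast)
  qed
qed (rule E(3))

lemma (in module) exists_colength_le_1_subspace:
  assumes C: "subspace C" and A: "subspace A" "A \<subset> C"
    and kill: "\<And>a y. a \<in> maxideal \<Longrightarrow> y \<in> C \<Longrightarrow> a *s y \<in> A"
  shows "\<exists>D. subspace D \<and> A \<subseteq> D \<and> D \<subset> C \<and> len 0 (+) scale D C \<le> 1"
proof -
  obtain x where x: "x \<in> C" "x \<notin> A" using A(2) by blast
  have "A \<subseteq> C" using A(2) by blast
  then obtain D where D: "subspace D" "A \<subseteq> D" "D \<subseteq> C" "x \<notin> D"
    and max: "\<forall>E. subspace E \<longrightarrow> D \<subset> E \<longrightarrow> E \<subseteq> C \<longrightarrow> x \<in> E"
    using exists_maximal_subspace_avoiding[OF A(1) _ x(2)] by blast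
  have "len 0 (+) scale D C \<le> 1"
  proof (rule len_le_1I)
    fix E assume E: "subspace E" "D \<subset> E" "E \<subseteq> C"
    show "E = C"
    proof (rule eq_if_above_maximal_avoiding[OF C D(1,3,4) _ _ E])
      show "x \<in> E'" if "subspace E'" "D \<subset> E'" "E' \<subseteq> C" for E' using max that by blast
      show "a *s y \<in> D" if "a \<in> maxideal" "y \<in> C" for a y using kill[OF that] D(2) by blast
    qed
  qed
  thus ?thesis using D x by blast
qed

lemma len_finite_if_artinian:
  fixes A B :: "'a::comm_ring_1 set"
  assumes art: "artinian TYPE('a)" and A: "module.subspace (*) A" and B: "module.subspace (*) B" "A \<subseteq> B"
    and kill: "\<And>a x. a \<in> maxideal \<Longrightarrow> x \<in> B \<Longrightarrow> a * x \<in> A"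
  shows "len 0 (+) (*) A B \<noteq> \<infinity>"
proof
  interpret R: module "(*) :: 'a \<Rightarrow> 'a \<Rightarrow> 'a" by (rule module_mult)
  assume inf: "len 0 (+) (*) A B = \<infinity>"
  define P where "P C \<longleftrightarrow> R.subspace C \<and> A \<subseteq> C \<and> C \<subseteq> B \<and> len 0 (+) (*) A C = \<infinity>" for C
  have step: "\<exists>D. P D \<and> D \<subset> C" if PC: "P C" for C
  proof -
    have C: "R.subspace C" "A \<subseteq> C" "C \<subseteq> B" "len 0 (+) (*) A C = \<infinity>" using PC by (simp_all add: P_def)
    hence "A \<subset> C" using R.len_refl[of A] by auto
    then obtain D where D: "R.subspace D" "A \<subseteq> D" "D \<subset> C" "len 0 (+) (*) D C \<le> 1"
      using R.exists_colength_le_1_subspace[OF C(1) A] kill C(3) by blast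
    have "len 0 (+) (*) A C = len 0 (+) (*) A D + len 0 (+) (*) D C"
      using D C by (intro R.len_add[OF A]) auto
    hence "len 0 (+) (*) A D = \<infinity>" using C(4) D(4)
      by (cases "len 0 (+) (*) A D"; cases "len 0 (+) (*) D C") (auto simp: one_enat_def)
    hence "P D" using D C by (auto simp: P_def)
    thus ?thesis using D(3) by blast
  qed
  define f where "f n = ((\<lambda>C. SOME D. P D \<and> D \<subset> C) ^^ n) B" for n
  have "P (f n) \<and> f (Suc n) \<subset> f n" for n
  proof (induction n)
    case 0
    have "P B" using A B inf by (simp add: P_def)
    thus ?case using someI_ex[OF step[of B]] by (simp add: f_def)
  next
    case (Suc n)
    have Pn: "P (f (Suc n))" using someI_ex[OF step[OF conjunct1[OF Suc.IH]]] by (simp add: f_def)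
    show ?case using Pn someI_ex[OF step[OF Pn]] by (simp add: f_def)
  qed
  hence "\<forall>n. is_ideal (f n) \<and> f (Suc n) \<subset> f n" by (simp add: P_def is_ideal_iff_subspace)
  thus False using art unfolding artinian_def by blast
qed

definition ann_maxideal_pow :: "nat \<Rightarrow> 'a::comm_ring_1 set" where
  "ann_maxideal_pow i = {x. \<forall>y. (\<forall>l<i. y l \<in> maxideal) \<longrightarrow> x * (\<Prod>l<i. y l) = 0}"

lemma ann_maxideal_pow_0: "ann_maxideal_pow 0 = {0}"
  by (auto simp: ann_maxideal_pow_def)

lemma subspace_ann_maxideal_pow: "module.subspace (*) (ann_maxideal_pow i)"
  by (auto simp: module.subspace_def[OF module_mult] ann_maxideal_pow_def distrib_right mult.assoc)

lemma ann_maxideal_pow_mono: "ann_maxideal_pow i \<subseteq> ann_maxideal_pow (Suc i)"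
  by (auto simp: ann_maxideal_pow_def mult.assoc[symmetric])

lemma mult_mem_ann_maxideal_pow:
  assumes a: "a \<in> maxideal" and x: "x \<in> ann_maxideal_pow (Suc i)"
  shows "a * x \<in> ann_maxideal_pow i"
  unfolding ann_maxideal_pow_def
proof (intro CollectI allI impI)
  fix y :: "nat \<Rightarrow> 'a" assume "\<forall>l<i. y l \<in> maxideal"
  hence "\<forall>l<Suc i. (y(i := a)) l \<in> maxideal" using a by (simp add: less_Suc_eq)
  hence "x * (\<Prod>l<Suc i. (y(i := a)) l) = 0" using x unfolding ann_maxideal_pow_def by blast
  moreover have "(\<Prod>l<Suc i. (y(i := a)) l) = (\<Prod>l<i. y l) * a" by (simp add: prod.lessThan_Suc)
  ultimately show "a * x * (\<Prod>l<i. y l) = 0" by (simp add: algebra_simps)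
qed

lemma len_ring_finite:
  assumes art: "artinian TYPE('a::comm_ring_1)"
    and nilp: "\<forall>x :: nat \<Rightarrow> 'a. (\<forall>i<p. x i \<in> maxideal) \<longrightarrow> (\<Prod>i<p. x i) = 0"
  shows "len 0 (+) ((*) :: 'a \<Rightarrow> 'a \<Rightarrow> 'a) {0} UNIV \<noteq> \<infinity>"
proof -
  interpret R: module "(*) :: 'a \<Rightarrow> 'a \<Rightarrow> 'a" by (rule module_mult)
  have "len 0 (+) (*) {0} (ann_maxideal_pow i :: 'a set) \<noteq> \<infinity>" for i
  proof (induction i)
    case 0
    show ?case by (simp add: ann_maxideal_pow_0 R.len_refl)
  next
    case (Suc i)
    have "len 0 (+) (*) {0} (ann_maxideal_pow (Suc i) :: 'a set)
        = len 0 (+) (*) {0} (ann_maxideal_pow i :: 'a set) + len 0 (+) (*) (ann_maxideal_pow i :: 'a set) (ann_maxideal_pow (Suc i))"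
      using R.subspace_0[OF subspace_ann_maxideal_pow[of i]] ann_maxideal_pow_mono[of i]
      by (intro R.len_add[OF R.subspace_single_0 subspace_ann_maxideal_pow[of i] subspace_ann_maxideal_pow[of "Suc i"]]) auto
    moreover have "len 0 (+) (*) (ann_maxideal_pow i :: 'a set) (ann_maxideal_pow (Suc i)) \<noteq> \<infinity>"
      by (rule len_finite_if_artinian[OF art subspace_ann_maxideal_pow subspace_ann_maxideal_pow
            ann_maxideal_pow_mono mult_mem_ann_maxideal_pow])
    ultimately show ?case using Suc.IH by (simp add: plus_eq_infty_iff_enat)
  qed
  moreover have "ann_maxideal_pow p = (UNIV :: 'a set)" using nilp by (simp add: ann_maxideal_pow_def)
  ultimately show ?thesis by metis
qed

section \<open>Actions factoring through the residue field\<close>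

text \<open>As in tor_len, R enters the tensor product through act and lengths are measured with respect
  to sc; for the Frobenius twist the two differ.\<close>
definition residual_action :: "('a::comm_ring_1 \<Rightarrow> 'v::ab_group_add \<Rightarrow> 'v) \<Rightarrow> ('a \<Rightarrow> 'v \<Rightarrow> 'v) \<Rightarrow> bool" where
  "residual_action act sc \<longleftrightarrow> module act \<and> module sc \<and> (\<forall>a c v. act a (sc c v) = sc c (act a v)) \<and>
     (\<forall>a\<in>maxideal. \<forall>v. act a v = 0)"

lemma residual_action_module_hom:
  "residual_action act sc \<Longrightarrow> module_hom (vec_scale sc) (vec_scale sc) (mv act D m n)"
  by (rule module_hom_mv) (simp_all add: residual_action_def)

lemma mv_pivot_form:
  assumes Q: "pivot_form a m n Q" and "a \<le> m" "a \<le> n" and act: "residual_action act sc" and y: "y \<in> vecs n"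
  shows "mv act Q m n y = (\<lambda>i. if i < a then y i else 0)"
proof -
  interpret module act using act by (simp add: residual_action_def)
  have entry: "act (Q i k) (y k) = (if k = i \<and> i < a then y k else 0)" if "i < m" "k < n" for i k
  proof (cases "i < a \<or> k < a")
    case True
    thus ?thesis using Q that by (auto simp: pivot_form_def leading_identity_def one_mat_def)
  next
    case False
    hence "Q i k \<in> maxideal" using Q that by (simp add: pivot_form_def)
    thus ?thesis using act False by (simp add: residual_action_def)
  qed
  have "(\<Sum>k<n. act (Q i k) (y k)) = (if i < a then y i else 0)" if "i < m" for i
  proof -
    have "(\<Sum>k<n. act (Q i k) (y k)) = (\<Sum>k<n. if k = i \<and> i < a then y k else 0)"
      using entry[OF that] by (intro sum.cong) auto
    thus ?thesis using assms(3) by (cases "i < a") auto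
  qed
  thus ?thesis using assms(2) by (auto simp: mv_def fun_eq_iff)
qed

lemma image_mv_normal_form:
  assumes nf: "normal_form D m n U Ui V Vi a" and act: "residual_action act sc"
  shows "mv act D m n ` vecs n = mv act Ui m m ` supp_vecs {..<a}"
proof -
  have m: "module act" using act by (simp add: residual_action_def)
  have a: "a \<le> m" "a \<le> n" and V: "mat_inv_pair n V Vi" and Q: "pivot_form a m n (mat_mult m U (mat_mult n D V))"
    using nf by (auto simp: normal_form_def)
  have "mv act (mat_mult m U (mat_mult n D V)) m n ` vecs n = supp_vecs {..<a}"
  proof
    show "mv act (mat_mult m U (mat_mult n D V)) m n ` vecs n \<subseteq> supp_vecs {..<a}"
      using mv_pivot_form[OF Q a act] by (auto simp: supp_vecs_def)
    show "supp_vecs {..<a} \<subseteq> mv act (mat_mult m U (mat_mult n D V)) m n ` vecs n"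
    proof
      fix z :: "nat \<Rightarrow> 'b" assume z: "z \<in> supp_vecs {..<a}"
      hence "z \<in> vecs n" using a by (auto simp: supp_vecs_def vecs_def)
      moreover have "mv act (mat_mult m U (mat_mult n D V)) m n z = z"
        using mv_pivot_form[OF Q a act \<open>z \<in> vecs n\<close>] z by (auto simp: supp_vecs_def fun_eq_iff)
      ultimately show "z \<in> mv act (mat_mult m U (mat_mult n D V)) m n ` vecs n" by (metis image_eqI)
    qed
  qed
  moreover have "mv act D m n ` vecs n
      = mv act Ui m m ` mv act (mat_mult m U (mat_mult n D V)) m n ` mv act Vi n n ` vecs n"
    using mv_normal_form[OF nf m] by (simp add: image_image)
  ultimately show ?thesis using mv_mat_inv_pair_image[OF m V] by simp
qed

lemma len_image_normal_form:
  assumes nf: "normal_form D m n U Ui V Vi a" and act: "residual_action act sc"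
  shows "len 0 (+) (vec_scale sc) {0} (mv act D m n ` vecs n) = of_nat a * len 0 (+) sc {0} UNIV"
proof -
  have m: "module act" "module sc" using act by (simp_all add: residual_action_def)
  have "a \<le> m" "mat_inv_pair m U Ui" using nf by (simp_all add: normal_form_def)
  hence "len 0 (+) (vec_scale sc) {0} (mv act Ui m m ` supp_vecs {..<a}) = len 0 (+) (vec_scale sc) {0} (supp_vecs {..<a})"
    by (intro len_image_mv_inv_pair[OF m(1) residual_action_module_hom[OF act] _ subspace_supp_vecs[OF m(2)]])
       (auto simp: supp_vecs_def vecs_def)
  thus ?thesis using image_mv_normal_form[OF nf act] len_supp_vecs[OF m(2)] by simp
qed

lemma len_image_mv_inv_mult:
  assumes act: "residual_action act sc" and V: "mat_inv_pair n V Vi"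
  shows "len 0 (+) (vec_scale sc) {0} (mv act (mat_mult n Vi A) n p ` vecs p)
    = len 0 (+) (vec_scale sc) {0} (mv act A n p ` vecs p)"
proof -
  have m: "module act" "module sc" using act by (simp_all add: residual_action_def)
  have "mv act (mat_mult n Vi A) n p ` vecs p = mv act Vi n n ` (mv act A n p ` vecs p)"
    by (simp add: mv_mat_mult[OF m(1)] image_image)
  thus ?thesis
    by (simp add: len_image_mv_inv_pair[OF m(1) residual_action_module_hom[OF act] V
          module_hom.subspace_image[OF residual_action_module_hom[OF act] subspace_vecs[OF m(2)]]]
        image_subsetI mv_in_vecs)
qed

lemma residual_action_residue_field:
  fixes sck :: "'a::comm_ring_1 \<Rightarrow> 'k::ab_group_add \<Rightarrow> 'k" and \<pi> :: "'a \<Rightarrow> 'k"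
  assumes k: "module sck" and \<pi>: "\<forall>a x. \<pi> (a * x) = sck a (\<pi> x)" "surj \<pi>" "{x. \<pi> x = 0} = maxideal"
    and loc: "local_ring TYPE('a)"
  shows "residual_action sck sck"
proof -
  have "sck a v = 0" if "a \<in> maxideal" for a v
  proof -
    obtain x where "v = \<pi> x" using \<pi>(2) by (metis surjD)
    moreover have "a * x \<in> maxideal" using maxideal_mult[OF loc that, of x] by (simp add: mult.commute)
    hence "\<pi> (a * x) = 0" using \<pi>(3) by blast
    ultimately show ?thesis using \<pi>(1) by simp
  qed
  thus ?thesis using k by (simp add: residual_action_def module.scale_left_commute)
qed

lemma len_residue_field:
  fixes sck :: "'a::comm_ring_1 \<Rightarrow> 'k::ab_group_add \<Rightarrow> 'k" and \<pi> :: "'a \<Rightarrow> 'k"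
  assumes k: "module sck" and \<pi>: "\<forall>a x. \<pi> (a * x) = sck a (\<pi> x)" "surj \<pi>" "{x. \<pi> x = 0} = maxideal"
  shows "len 0 (+) sck {0} UNIV = 1"
proof (rule antisym)
  interpret module sck by (rule k)
  show "len 0 (+) sck {0} UNIV \<le> 1"
  proof (rule len_le_1I)
    fix S assume S: "subspace S" "{0} \<subset> S"
    then obtain z where z: "z \<in> S" "z \<noteq> 0" by blast
    obtain x where zx: "z = \<pi> x" using \<pi>(2) by (metis surjD)
    have "x \<notin> maxideal"
    proof
      assume "x \<in> maxideal"
      hence "\<pi> x = 0" using \<pi>(3) by blast
      thus False using z zx by simp
    qed
    hence "x dvd 1" by (simp add: maxideal_def)
    then obtain s where xs: "1 = x * s" by (rule dvdE)
    have "w \<in> S" for w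
    proof -
      obtain y where "w = \<pi> y" using \<pi>(2) by (metis surjD)
      moreover have "(y * s) * x = y * (x * s)" by (simp add: ac_simps)
      ultimately have "w = \<pi> ((y * s) * x)" using xs by simp
      also have "\<dots> = sck (y * s) z" using \<pi>(1) zx by simp
      finally show ?thesis using subspace_scale[OF S(1) z(1)] by simp
    qed
    thus "S = UNIV" by blast
  qed
  have "(1::'a) \<notin> maxideal" by (simp add: maxideal_def)
  hence "\<pi> 1 \<noteq> 0" using \<pi>(3) by blast
  hence "{0} \<subset> (UNIV :: 'k set)" by auto
  thus "1 \<le> len 0 (+) sck {0} UNIV" by (rule len_ge_1[rotated 2]) simp_all
qed

lemma module_frob_act:
  assumes "prime p" "CHAR('a::comm_ring_1) = p"
  shows "module (frob_act p r :: 'a \<Rightarrow> 'a \<Rightarrow> 'a)"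
proof -
  have "(a + b) ^ (p ^ r) = a ^ (p ^ r) + b ^ (p ^ r)" for a b :: 'a
    by (rule freshmans_dream') (use assms in auto)
  thus ?thesis by unfold_locales (simp_all add: frob_act_def algebra_simps power_mult_distrib)
qed

lemma residual_action_frob_act:
  assumes "prime p" "CHAR('a::comm_ring_1) = p" "r \<ge> 1"
    and nilp: "\<forall>x :: nat \<Rightarrow> 'a. (\<forall>i<p. x i \<in> maxideal) \<longrightarrow> (\<Prod>i<p. x i) = 0"
  shows "residual_action (frob_act p r :: 'a \<Rightarrow> 'a \<Rightarrow> 'a) (*)"
proof -
  have "a ^ (p ^ r) = 0" if "a \<in> maxideal" for a :: 'a
  proof -
    have "a ^ p = 0" using nilp[rule_format, of "\<lambda>_. a"] that by simp
    moreover have "p \<le> p ^ r" using assms(3) prime_gt_1_nat[OF assms(1)] by (simp add: self_le_power)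
    ultimately show ?thesis by (metis le_add_diff_inverse mult_zero_left power_add)
  qed
  thus ?thesis using module_frob_act[OF assms(1,2)] module_mult
    by (simp add: residual_action_def frob_act_def algebra_simps)
qed

text \<open>Nakayama's lemma in matrix form.\<close>
lemma supp_vecs_subset_image_if_rank:
  fixes A :: "nat \<Rightarrow> nat \<Rightarrow> 'a::comm_ring_1" and sck :: "'a \<Rightarrow> 'k::ab_group_add \<Rightarrow> 'k"
  assumes k: "residual_action sck sck" "len 0 (+) sck {0} UNIV = 1"
    and R: "len 0 (+) ((*) :: 'a \<Rightarrow> 'a \<Rightarrow> 'a) {0} UNIV = enat LR"
    and I: "finite I" "I \<subseteq> {..<n}" and sub: "mv (*) A n p ` vecs p \<subseteq> supp_vecs I"
    and rank: "len 0 (+) (vec_scale sck) {0} (mv sck A n p ` vecs p) = enat (card I)"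
  shows "supp_vecs I \<subseteq> mv (*) A n p ` vecs p"
proof -
  have mR: "module ((*) :: 'a \<Rightarrow> 'a \<Rightarrow> 'a)" by (rule module_mult)
  interpret V: module "vec_scale ((*) :: 'a \<Rightarrow> 'a \<Rightarrow> 'a) :: 'a \<Rightarrow> (nat \<Rightarrow> 'a) \<Rightarrow> _"
    by (rule module_vec_scale[OF mR])
  obtain U Ui W Wi a where nf: "normal_form A n p U Ui W Wi a" using normal_form_exists by blast
  have "enat (card I) = of_nat a" using len_image_normal_form[OF nf k(1)] k(2) rank by simp
  hence a: "a = card I" by (simp add: of_nat_eq_enat)
  have U: "mat_inv_pair n U Ui" "a \<le> n" using nf by (simp_all add: normal_form_def)
  let ?S = "mv (*) Ui n n ` supp_vecs {..<a}"
  have sS: "V.subspace ?S"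
    by (rule module_hom.subspace_image[OF module_hom_mv_self[OF module_mult] subspace_supp_vecs[OF module_mult]])
  have "len 0 (+) (vec_scale (*)) {0} ?S = len 0 (+) (vec_scale (*)) {0} (supp_vecs {..<a} :: (nat \<Rightarrow> 'a) set)"
    using U by (intro len_image_mv_inv_pair[OF module_mult module_hom_mv_self[OF module_mult] _ subspace_supp_vecs[OF module_mult]])
      (auto simp: supp_vecs_def vecs_def)
  also have "\<dots> = of_nat a * len 0 (+) ((*) :: 'a \<Rightarrow> 'a \<Rightarrow> 'a) {0} UNIV"
    using len_supp_vecs[OF module_mult, of "{..<a}"] by simp
  also have "\<dots> = len 0 (+) (vec_scale (*)) {0} (supp_vecs I :: (nat \<Rightarrow> 'a) set)"
    unfolding a by (rule len_supp_vecs[OF module_mult I(1), symmetric])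
  finally have eq: "len 0 (+) (vec_scale (*)) {0} (supp_vecs I :: (nat \<Rightarrow> 'a) set) = len 0 (+) (vec_scale (*)) {0} ?S" ..
  have "?S = supp_vecs I"
  proof (rule V.eq_if_len_eq[OF V.subspace_single_0 sS subspace_supp_vecs[OF module_mult] _ _ eq])
    show "{0} \<subseteq> ?S" using V.subspace_0[OF sS] by blast
    show "?S \<subseteq> supp_vecs I" using supp_vecs_subset_image_normal_form[OF nf module_mult] sub by blast
    show "len 0 (+) (vec_scale (*)) {0} (supp_vecs I :: (nat \<Rightarrow> 'a) set) \<noteq> \<infinity>"
      using R len_supp_vecs[OF mR I(1)] by (simp add: of_nat_eq_enat)
  qed
  thus ?thesis using supp_vecs_subset_image_normal_form[OF nf module_mult] by blast
qed

section \<open>Free resolutions\<close>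

lemma module_hom_lin: "module smul \<Longrightarrow> module_hom (vec_scale (*)) smul (lin smul g n)"
  by (simp add: module_hom_iff module_vec_scale module_mult lin_def vec_scale_def module.scale_left_distrib
      sum.distrib module.scale_sum_right module.scale_scale)

lemma lin_image_subset:
  assumes "module smul" "module.subspace smul K" "\<forall>k<n. g k \<in> K"
  shows "lin smul g n ` vecs n \<subseteq> K"
  using assms by (auto simp: lin_def intro!: module.subspace_sum[OF assms(1,2)] module.subspace_scale[OF assms(1,2)])

lemma len_lin_image_extend:
  assumes smul: "module smul" and y: "y \<notin> lin smul g n ` vecs n"
  shows "len 0 (+) smul {0} (lin smul g n ` vecs n) + 1
    \<le> len 0 (+) smul {0} (lin smul (g(n := y)) (Suc n) ` vecs (Suc n))"
proof -
  interpret module smul by (rule smul)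
  define W where "W = lin smul g n ` vecs n"
  define W' where "W' = lin smul (g(n := y)) (Suc n) ` vecs (Suc n)"
  have sub: "subspace (lin smul h k ` vecs k)" for h k
    by (rule module_hom.subspace_image[OF module_hom_lin[OF smul] subspace_vecs[OF module_mult]])
  have "W \<subseteq> W'"
  proof
    fix w assume "w \<in> W"
    then obtain x where x: "x \<in> vecs n" "w = lin smul g n x" by (auto simp: W_def)
    hence "w = lin smul (g(n := y)) (Suc n) x" by (simp add: lin_def vecs_def)
    moreover have "x \<in> vecs (Suc n)" using x(1) by (simp add: vecs_def)
    ultimately show "w \<in> W'" by (simp add: W'_def)
  qed
  moreover have "y \<in> W'"
  proof -
    have "lin smul (g(n := y)) (Suc n) (one_mat n) = y" by (simp add: lin_def one_mat_def)
    moreover have "one_mat n \<in> vecs (Suc n)" by (simp add: vecs_def one_mat_def)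
    ultimately show ?thesis unfolding W'_def by (metis image_eqI)
  qed
  ultimately have WW': "W \<subset> W'" using y by (auto simp: W_def)
  have sW: "subspace W" "subspace W'" by (simp_all add: W_def W'_def sub)
  have "len 0 (+) smul {0} W + 1 \<le> len 0 (+) smul {0} W + len 0 (+) smul W W'"
    using len_ge_1[OF sW WW'] by (rule add_left_mono)
  also have "\<dots> = len 0 (+) smul {0} W'"
    using len_add[OF subspace_single_0 sW _ psubset_imp_subset[OF WW']] subspace_0[OF sW(1)] by simp
  finally show ?thesis by (simp add: W_def W'_def)
qed

lemma finitely_generated_if_len_finite:
  assumes smul: "module smul" and K: "module.subspace smul K" and fin: "len 0 (+) smul {0} K \<noteq> \<infinity>"
  shows "\<exists>n g. (\<forall>k<n. g k \<in> K) \<and> K = lin smul g n ` vecs n"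
proof (rule ccontr)
  interpret module smul by (rule smul)
  assume not_fg: "\<not> ?thesis"
  have sub: "subspace (lin smul g n ` vecs n)" for g n
    by (rule module_hom.subspace_image[OF module_hom_lin[OF smul] subspace_vecs[OF module_mult]])
  have "\<exists>g. (\<forall>k<n. g k \<in> K) \<and> enat n \<le> len 0 (+) smul {0} (lin smul g n ` vecs n)" for n
  proof (induction n)
    case 0
    show ?case by (simp flip: zero_enat_def)
  next
    case (Suc n)
    then obtain g where g: "\<forall>k<n. g k \<in> K" and len: "enat n \<le> len 0 (+) smul {0} (lin smul g n ` vecs n)"
      by blast
    have "lin smul g n ` vecs n \<subseteq> K" using lin_image_subset[OF smul K g] .
    moreover have "lin smul g n ` vecs n \<noteq> K" using not_fg g by blast
    ultimately obtain y where y: "y \<in> K" "y \<notin> lin smul g n ` vecs n" by blast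
    have "enat (Suc n) \<le> len 0 (+) smul {0} (lin smul g n ` vecs n) + 1"
      using add_right_mono[OF len, of "enat 1"] by (simp add: one_enat_def)
    also have "\<dots> \<le> len 0 (+) smul {0} (lin smul (g(n := y)) (Suc n) ` vecs (Suc n))"
      by (rule len_lin_image_extend[OF smul y(2)])
    finally have "enat (Suc n) \<le> len 0 (+) smul {0} (lin smul (g(n := y)) (Suc n) ` vecs (Suc n))" .
    moreover have "\<forall>k<Suc n. (g(n := y)) k \<in> K" using g y by (simp add: less_Suc_eq)
    ultimately show ?case by blast
  qed
  moreover obtain N where N: "len 0 (+) smul {0} K = enat N" using fin by auto
  ultimately obtain g where g: "\<forall>k<Suc N. g k \<in> K"
    and le: "enat (Suc N) \<le> len 0 (+) smul {0} (lin smul g (Suc N) ` vecs (Suc N))"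
    by blast
  have "len 0 (+) smul {0} (lin smul g (Suc N) ` vecs (Suc N)) \<le> len 0 (+) smul {0} K"
    by (rule len_mono[OF subspace_single_0 sub K]) (use lin_image_subset[OF smul K g] subspace_0[OF sub] in auto)
  from order_trans[OF le this] show False using N by simp
qed

lemma subspace_eq_mv_image:
  fixes K :: "(nat \<Rightarrow> 'a::comm_ring_1) set"
  assumes R: "len 0 (+) ((*) :: 'a \<Rightarrow> 'a \<Rightarrow> 'a) {0} UNIV \<noteq> \<infinity>"
    and K: "module.subspace (vec_scale (*)) K" "K \<subseteq> vecs n"
  shows "\<exists>q Dm. K = mv (*) Dm n q ` vecs q"
proof -
  interpret V: module "vec_scale ((*) :: 'a \<Rightarrow> 'a \<Rightarrow> 'a) :: 'a \<Rightarrow> (nat \<Rightarrow> 'a) \<Rightarrow> _"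
    by (rule module_vec_scale[OF module_mult])
  have "len 0 (+) (vec_scale (*)) {0} K \<le> len 0 (+) (vec_scale (*)) {0} (vecs n :: (nat \<Rightarrow> 'a) set)"
    by (rule V.len_mono[OF V.subspace_single_0 K(1) subspace_vecs[OF module_mult]])
       (use V.subspace_0[OF K(1)] K(2) in auto)
  also have "\<dots> = of_nat n * len 0 (+) ((*) :: 'a \<Rightarrow> 'a \<Rightarrow> 'a) {0} UNIV"
    using len_supp_vecs[OF module_mult, of "{..<n}"] by (simp add: vecs_eq_supp_vecs)
  finally have le: "len 0 (+) (vec_scale (*)) {0} K \<le> of_nat n * len 0 (+) ((*) :: 'a \<Rightarrow> 'a \<Rightarrow> 'a) {0} UNIV" .
  obtain N where "len 0 (+) ((*) :: 'a \<Rightarrow> 'a \<Rightarrow> 'a) {0} UNIV = enat N" using R by auto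
  hence "len 0 (+) (vec_scale (*)) {0} K \<le> enat (n * N)" using le by (simp add: of_nat_eq_enat)
  hence "len 0 (+) (vec_scale (*)) {0} K \<noteq> \<infinity>" by (cases "len 0 (+) (vec_scale (*)) {0} K") simp_all
  then obtain q g where g: "\<forall>k<q. g k \<in> K" and Kg: "K = lin (vec_scale (*)) g q ` vecs q"
    using finitely_generated_if_len_finite[OF module_vec_scale[OF module_mult] K(1)] by blast
  have "lin (vec_scale (*)) g q x = mv (*) (\<lambda>i k. g k i) n q x" for x
  proof
    fix i
    have "g k i = 0" if "k < q" "\<not> i < n" for k using g that K(2) by (auto simp: vecs_def)
    moreover have "lin (vec_scale (*)) g q x i = (\<Sum>k<q. x k * g k i)"
      by (induction q) (simp_all add: lin_def vec_scale_def)
    ultimately show "lin (vec_scale (*)) g q x i = mv (*) (\<lambda>i k. g k i) n q x i"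
      by (auto simp: mv_def mult.commute)
  qed
  thus ?thesis using Kg by (intro exI[of _ q] exI[of _ "\<lambda>i k. g k i"]) (simp add: image_def)
qed

definition generating_matrix :: "(nat \<Rightarrow> 'a) set \<Rightarrow> nat \<Rightarrow> nat \<times> (nat \<Rightarrow> nat \<Rightarrow> 'a::comm_ring_1)" where
  "generating_matrix K n = (SOME (q, Dm). K = mv (*) Dm n q ` vecs q)"

text \<open>Step i yields the rank b i, the matrix D i and the kernel K i of D i, the next module to be
  generated; the matrix at step 0 is a dummy.\<close>
primrec syzygy_data ::
    "nat \<Rightarrow> (nat \<Rightarrow> 'a) set \<Rightarrow> nat \<Rightarrow> nat \<times> (nat \<Rightarrow> nat \<Rightarrow> 'a::comm_ring_1) \<times> (nat \<Rightarrow> 'a) set" where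
  "syzygy_data b0 K0 0 = (b0, \<lambda>_ _. 0, K0)"
| "syzygy_data b0 K0 (Suc i) =
    (let (b, _, K) = syzygy_data b0 K0 i; (q, Dm) = generating_matrix K b
     in (q, Dm, {x \<in> vecs q. mv (*) Dm b q x = 0}))"

lemma syzygy_data:
  fixes K0 :: "(nat \<Rightarrow> 'a::comm_ring_1) set"
  assumes R: "len 0 (+) ((*) :: 'a \<Rightarrow> 'a \<Rightarrow> 'a) {0} UNIV \<noteq> \<infinity>"
    and K0: "module.subspace (vec_scale (*)) K0" "K0 \<subseteq> vecs b0"
  defines "b \<equiv> \<lambda>i. fst (syzygy_data b0 K0 i)" and "D \<equiv> \<lambda>i. fst (snd (syzygy_data b0 K0 i))"
    and "K \<equiv> \<lambda>i. snd (snd (syzygy_data b0 K0 i))"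
  shows "b 0 = b0" and "K 0 = K0"
    and "K i = mv (*) (D (Suc i)) (b i) (b (Suc i)) ` vecs (b (Suc i))"
    and "K (Suc i) = {x \<in> vecs (b (Suc i)). mv (*) (D (Suc i)) (b i) (b (Suc i)) x = 0}"
proof -
  show "b 0 = b0" "K 0 = K0" by (simp_all add: b_def K_def)
  have step: "b (Suc i) = fst (generating_matrix (K i) (b i))" "D (Suc i) = snd (generating_matrix (K i) (b i))"
    "K (Suc i) = {x \<in> vecs (b (Suc i)). mv (*) (D (Suc i)) (b i) (b (Suc i)) x = 0}" for i
    by (simp_all add: b_def D_def K_def split_def Let_def)
  thus "K (Suc i) = {x \<in> vecs (b (Suc i)). mv (*) (D (Suc i)) (b i) (b (Suc i)) x = 0}" by blast
  have "module.subspace (vec_scale (*)) (K i) \<and> K i \<subseteq> vecs (b i)"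
  proof (cases i)
    case (Suc j)
    thus ?thesis using step(3)[of j] subspace_kernel_mv[OF module_mult module_mult, where D = "D (Suc j)" and m = "b j" and n = "b (Suc j)"]
      by (simp add: ac_simps)
  qed (use K0 \<open>b 0 = b0\<close> \<open>K 0 = K0\<close> in simp)
  hence "\<exists>qD. K i = mv (*) (snd qD) (b i) (fst qD) ` vecs (fst qD)"
    using subspace_eq_mv_image[OF R] by auto
  hence "K i = mv (*) (snd (generating_matrix (K i) (b i))) (b i) (fst (generating_matrix (K i) (b i)))
      ` vecs (fst (generating_matrix (K i) (b i)))"
    unfolding generating_matrix_def split_def by (rule someI_ex)
  thus "K i = mv (*) (D (Suc i)) (b i) (b (Suc i)) ` vecs (b (Suc i))" using step by simp
qed

lemma free_res_iff:
  "free_res smul g b D \<longleftrightarrow>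
    lin smul g (b 0) ` vecs (b 0) = UNIV \<and>
    {x \<in> vecs (b 0). lin smul g (b 0) x = 0} = mv (*) (D 1) (b 0) (b 1) ` vecs (b 1) \<and>
    (\<forall>i\<ge>1. {x \<in> vecs (b i). mv (*) (D i) (b (i - 1)) (b i) x = 0}
              = mv (*) (D (Suc i)) (b i) (b (Suc i)) ` vecs (b (Suc i)))"
proof -
  have "mv (*) (idm i) n n x = x" if "x \<in> vecs n" for i n and x :: "nat \<Rightarrow> 'a::comm_ring_1"
    using mv_one_mat[OF module_mult that] by (simp add: idm_eq_one_mat)
  thus ?thesis by (simp add: free_res_def proj_res_def Let_def image_mv_idm)
qed

lemma free_res_exists:
  fixes smul :: "'a::comm_ring_1 \<Rightarrow> 'm::ab_group_add \<Rightarrow> 'm"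
  assumes M: "module smul" "len 0 (+) smul {0} UNIV \<noteq> \<infinity>"
    and R: "len 0 (+) ((*) :: 'a \<Rightarrow> 'a \<Rightarrow> 'a) {0} UNIV \<noteq> \<infinity>"
  shows "\<exists>g b D. free_res smul g b D"
proof -
  obtain b0 g where g: "UNIV = lin smul g b0 ` vecs b0"
    using finitely_generated_if_len_finite[OF M(1) module.subspace_UNIV[OF M(1)] M(2)] by blast
  define K0 where "K0 = {x \<in> vecs b0. lin smul g b0 x = 0}"
  have K0: "module.subspace (vec_scale (*)) K0" "K0 \<subseteq> vecs b0"
    using module.subspace_inter[OF module_vec_scale[OF module_mult] subspace_vecs[OF module_mult]
        module_hom.subspace_kernel[OF module_hom_lin[OF M(1)]]]
    by (auto simp: K0_def Int_def)
  define b where "b i = fst (syzygy_data b0 K0 i)" for i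
  define D where "D i = fst (snd (syzygy_data b0 K0 i))" for i
  define K where "K i = snd (snd (syzygy_data b0 K0 i))" for i
  note syz = syzygy_data[OF R K0, folded b_def D_def K_def]
  have "free_res smul g b D"
    unfolding free_res_iff
  proof (intro conjI allI impI)
    show "lin smul g (b 0) ` vecs (b 0) = UNIV" using g syz(1) by simp
    show "{x \<in> vecs (b 0). lin smul g (b 0) x = 0} = mv (*) (D 1) (b 0) (b 1) ` vecs (b 1)"
      using syz(1,2) syz(3)[of 0] by (simp add: K0_def)
    fix i :: nat assume "1 \<le> i"
    then obtain j where "i = Suc j" by (cases i) auto
    thus "{x \<in> vecs (b i). mv (*) (D i) (b (i - 1)) (b i) x = 0} = mv (*) (D (Suc i)) (b i) (b (Suc i)) ` vecs (b (Suc i))"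
      using syz(4)[of j] syz(3)[of i] by simp
  qed
  thus ?thesis by blast
qed

lemma free_res_exact:
  assumes "free_res smul g b D" "1 \<le> i"
  shows "{x \<in> vecs (b i). mv (*) (D i) (b (i - 1)) (b i) x = 0} = mv (*) (D (Suc i)) (b i) (b (Suc i)) ` vecs (b (Suc i))"
  using assms by (simp add: free_res_iff)

lemma free_res_augmentation:
  assumes "free_res smul g b D"
  shows "{x \<in> vecs (b 0). lin smul g (b 0) x = 0} = mv (*) (D 1) (b 0) (b 1) ` vecs (b 1)"
    and "lin smul g (b 0) ` vecs (b 0) = UNIV"
  using assms by (simp_all add: free_res_iff)

lemma free_res_mat_mult_eq_0:
  fixes D :: "nat \<Rightarrow> nat \<Rightarrow> nat \<Rightarrow> 'a::comm_ring_1"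
  assumes "free_res smul g b D" "1 \<le> i"
  shows "mat_eq_on (b (i - 1)) (b (Suc i)) (mat_mult (b i) (D i) (D (Suc i))) (\<lambda>_ _. 0)"
proof (rule mat_eq_on_if_mv_eq)
  fix x :: "nat \<Rightarrow> 'a" assume "x \<in> vecs (b (Suc i))"
  hence "mv (*) (D i) (b (i - 1)) (b i) (mv (*) (D (Suc i)) (b i) (b (Suc i)) x) = 0"
    using free_res_exact[OF assms] by blast
  thus "mv (*) (mat_mult (b i) (D i) (D (Suc i))) (b (i - 1)) (b (Suc i)) x = mv (*) (\<lambda>_ _. 0) (b (i - 1)) (b (Suc i)) x"
    by (simp add: mv_mat_mult[OF module_mult] mv_zero_mat[OF module_mult])
qed

lemma mv_free_res_comp:
  fixes D :: "nat \<Rightarrow> nat \<Rightarrow> nat \<Rightarrow> 'a::comm_ring_1" and act :: "'a \<Rightarrow> 'v::ab_group_add \<Rightarrow> 'v"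
  assumes "free_res smul g b D" "1 \<le> i" "module act"
  shows "mv act (D i) (b (i - 1)) (b i) (mv act (D (Suc i)) (b i) (b (Suc i)) x) = 0"
  using mv_cong[OF free_res_mat_mult_eq_0[OF assms(1,2)], of act x]
  by (simp add: mv_mat_mult[OF assms(3)] mv_zero_mat[OF assms(3)])

lemma finite_pd_if_truncated:
  fixes D :: "nat \<Rightarrow> nat \<Rightarrow> nat \<Rightarrow> 'a::comm_ring_1" and D' :: "nat \<Rightarrow> nat \<Rightarrow> 'a"
  assumes fr: "free_res smul g b D" and s: "1 \<le> s"
    and img: "mv (*) D' (b (s - 1)) a ` vecs a = mv (*) (D s) (b (s - 1)) (b s) ` vecs (b s)"
    and inj: "{x \<in> vecs a. mv (*) D' (b (s - 1)) a x = 0} = {0}"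
  shows "finite_pd smul"
proof -
  define b' where "b' i = (if i < s then b i else if i = s then a else 0)" for i
  define D'' where "D'' i = (if i = s then D' else D i)" for i
  have zero: "mv (*) A m 0 x = 0" for A m and x :: "nat \<Rightarrow> 'a" by (simp add: mv_def fun_eq_iff)
  have "free_res smul g b' D''"
    unfolding free_res_iff
  proof (intro conjI allI impI)
    show "lin smul g (b' 0) ` vecs (b' 0) = UNIV" using s free_res_augmentation(2)[OF fr] by (simp add: b'_def)
    show "{x \<in> vecs (b' 0). lin smul g (b' 0) x = 0} = mv (*) (D'' 1) (b' 0) (b' 1) ` vecs (b' 1)"
      using s free_res_augmentation(1)[OF fr] img by (cases "s = 1") (simp_all add: b'_def D''_def)
    fix i :: nat assume i: "1 \<le> i"
    consider "Suc i < s" | "Suc i = s" | "i = s" | "s < i" by linarith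
    thus "{x \<in> vecs (b' i). mv (*) (D'' i) (b' (i - 1)) (b' i) x = 0}
        = mv (*) (D'' (Suc i)) (b' i) (b' (Suc i)) ` vecs (b' (Suc i))"
    proof cases
      case 1
      hence "i - 1 < s" "i < s" "i \<noteq> s" "Suc i \<noteq> s" by simp_all
      thus ?thesis using 1 free_res_exact[OF fr i] by (simp add: b'_def D''_def)
    next
      case 2
      hence "i - 1 < s" "i < s" "i \<noteq> s" "s - 1 = i" by simp_all
      thus ?thesis using 2 free_res_exact[OF fr i] img by (simp add: b'_def D''_def)
    next
      case 3
      thus ?thesis using inj i by (simp add: b'_def D''_def vecs_0 zero)
    next
      case 4
      thus ?thesis by (simp add: b'_def vecs_0 zero)
    qed
  qed
  moreover have "\<forall>i>s. mv (*) (idm i :: nat \<Rightarrow> nat \<Rightarrow> 'a) (b' i) (b' i) ` vecs (b' i) = {0}"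
    by (simp add: b'_def image_mv_idm vecs_0 mv_def fun_eq_iff)
  ultimately show ?thesis unfolding finite_pd_def free_res_def by blast
qed

section \<open>Homology of the tensored resolution\<close>

lemma len_homology_free_res:
  fixes act sc :: "'a::comm_ring_1 \<Rightarrow> 'v::ab_group_add \<Rightarrow> 'v"
  assumes fr: "free_res smul g b D" and s: "1 \<le> s" and act: "residual_action act sc"
    and nf1: "normal_form (D s) (b (s - 1)) (b s) U Ui V Vi a1"
    and nf2: "normal_form (D (Suc s)) (b s) (b (Suc s)) U' Ui' V' Vi' a2"
    and N: "len 0 (+) sc {0} UNIV = enat N"
  shows "len 0 (+) (vec_scale sc) (mv act (D (Suc s)) (b s) (b (Suc s)) ` vecs (b (Suc s)))
           {y \<in> vecs (b s). mv act (D s) (b (s - 1)) (b s) y = 0} = enat ((b s - a1 - a2) * N)"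
    and "a2 * N \<le> (b s - a1) * N"
proof -
  have m: "module act" "module sc" using act by (simp_all add: residual_action_def)
  interpret V: module "vec_scale sc :: 'a \<Rightarrow> (nat \<Rightarrow> 'v) \<Rightarrow> _" by (rule module_vec_scale[OF m(2)])
  interpret d1: module_hom "vec_scale sc" "vec_scale sc" "mv act (D s) (b (s - 1)) (b s)"
    by (rule residual_action_module_hom[OF act])
  interpret d2: module_hom "vec_scale sc" "vec_scale sc" "mv act (D (Suc s)) (b s) (b (Suc s))"
    by (rule residual_action_module_hom[OF act])
  define Z where "Z = {y \<in> vecs (b s). mv act (D s) (b (s - 1)) (b s) y = 0}"
  define B where "B = mv act (D (Suc s)) (b s) (b (Suc s)) ` vecs (b (Suc s))"
  have sZ: "V.subspace Z" unfolding Z_def by (rule subspace_kernel_mv) (use m act in \<open>simp_all add: residual_action_def\<close>)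
  have sB: "V.subspace B" unfolding B_def by (rule d2.subspace_image[OF subspace_vecs[OF m(2)]])
  have BZ: "B \<subseteq> Z" using mv_free_res_comp[OF fr s m(1)] mv_in_vecs by (auto simp: B_def Z_def)
  have "len 0 (+) (vec_scale sc) {0} Z + enat (a1 * N) = enat (b s * N)"
    using d1.len_kernel_add_len_image[OF subspace_vecs[OF m(2), of "b s"]] len_image_normal_form[OF nf1 act]
      len_supp_vecs[OF m(2), of "{..<b s}"] N
    by (simp add: Z_def vecs_eq_supp_vecs of_nat_eq_enat)
  moreover have "len 0 (+) (vec_scale sc) {0} Z = enat (a2 * N) + len 0 (+) (vec_scale sc) B Z"
    using V.len_add[OF V.subspace_single_0 sB sZ _ BZ] V.subspace_0[OF sB]
      len_image_normal_form[OF nf2 act] N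
    by (simp add: B_def of_nat_eq_enat)
  ultimately have "enat (a2 * N) + len 0 (+) (vec_scale sc) B Z + enat (a1 * N) = enat (b s * N)" by simp
  then obtain h where "len 0 (+) (vec_scale sc) B Z = enat h" "a2 * N + h + a1 * N = b s * N"
    by (cases "len 0 (+) (vec_scale sc) B Z") auto
  thus "len 0 (+) (vec_scale sc) B Z = enat ((b s - a1 - a2) * N)" "a2 * N \<le> (b s - a1) * N"
    by (simp_all add: diff_mult_distrib add_mult_distrib)
qed

text \<open>If the residue field sees no homology in degree s, the pivot form of the s-th differential
  has no columns beyond its pivots.\<close>
lemma pivot_columns_eq_0:
  fixes D :: "nat \<Rightarrow> nat \<Rightarrow> nat \<Rightarrow> 'a::comm_ring_1" and sck :: "'a \<Rightarrow> 'k::ab_group_add \<Rightarrow> 'k"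
  assumes fr: "free_res smul g b D" and s: "1 \<le> s"
    and k: "residual_action sck sck" "len 0 (+) sck {0} UNIV = 1"
    and R: "len 0 (+) ((*) :: 'a \<Rightarrow> 'a \<Rightarrow> 'a) {0} UNIV = enat LR"
    and nf: "normal_form (D s) (b (s - 1)) (b s) U Ui V Vi a"
    and rank: "len 0 (+) (vec_scale sck) {0} (mv sck (D (Suc s)) (b s) (b (Suc s)) ` vecs (b (Suc s)))
      = enat (b s - a)"
    and ij: "i < b (s - 1)" "a \<le> j" "j < b s"
  shows "mat_mult (b (s - 1)) U (mat_mult (b s) (D s) V) i j = 0"
proof -
  define m n p where "m = b (s - 1)" and "n = b s" and "p = b (Suc s)"
  define Q where "Q = mat_mult m U (mat_mult n (D s) V)"
  define Dp where "Dp = mat_mult n Vi (D (Suc s))"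
  have mR: "module ((*) :: 'a \<Rightarrow> 'a \<Rightarrow> 'a)" by (rule module_mult)
  have V: "mat_inv_pair n V Vi" and a: "a \<le> m" "a \<le> n" and lead: "leading_identity a m n Q"
    using nf by (simp_all add: normal_form_def pivot_form_def m_def n_def Q_def)
  have QDp: "mv (*) Q m n (mv (*) Dp n p x) = 0" for x
  proof -
    have "mv (*) V n n (mv (*) Vi n n (mv (*) (D (Suc s)) n p x)) = mv (*) (D (Suc s)) n p x"
      by (rule mv_mat_inv_pair[OF mR V mv_in_vecs])
    thus ?thesis using mv_free_res_comp[OF fr s mR, of x] mv_zero[OF mR]
      by (simp add: Q_def Dp_def mv_mat_mult[OF mR] m_def n_def p_def)
  qed
  have sub: "mv (*) Dp n p ` vecs p \<subseteq> supp_vecs {a..<n}"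
    using supp_vecs_if_mv_leading_identity_eq_0[OF mR lead a mv_in_vecs QDp] by blast
  have "len 0 (+) (vec_scale sck) {0} (mv sck Dp n p ` vecs p) = enat (card {a..<n})"
    using rank len_image_mv_inv_mult[OF k(1) V] by (simp add: Dp_def n_def p_def)
  hence "supp_vecs {a..<n} \<subseteq> mv (*) Dp n p ` vecs p"
    by (intro supp_vecs_subset_image_if_rank[OF k R _ _ sub]) auto
  moreover have "one_mat j \<in> (supp_vecs {a..<n} :: (nat \<Rightarrow> 'a) set)"
    using ij by (simp add: supp_vecs_def one_mat_def n_def)
  ultimately obtain x where "one_mat j = mv (*) Dp n p x" by blast
  hence "mv (*) Q m n (one_mat j) i = 0" using QDp[of x] by simp
  thus ?thesis using mv_one_mat_col[of i m j n Q] ij by (simp add: Q_def m_def n_def)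
qed

lemma finite_pd_if_rank:
  fixes D :: "nat \<Rightarrow> nat \<Rightarrow> nat \<Rightarrow> 'a::comm_ring_1" and sck :: "'a \<Rightarrow> 'k::ab_group_add \<Rightarrow> 'k"
  assumes fr: "free_res smul g b D" and s: "1 \<le> s"
    and k: "residual_action sck sck" "len 0 (+) sck {0} UNIV = 1"
    and R: "len 0 (+) ((*) :: 'a \<Rightarrow> 'a \<Rightarrow> 'a) {0} UNIV = enat LR"
    and nf: "normal_form (D s) (b (s - 1)) (b s) U Ui V Vi a"
    and rank: "len 0 (+) (vec_scale sck) {0} (mv sck (D (Suc s)) (b s) (b (Suc s)) ` vecs (b (Suc s)))
      = enat (b s - a)"
  shows "finite_pd smul"
  using image_mv_pivot_columns[OF nf pivot_columns_eq_0[OF fr s k R nf rank]]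
    kernel_mv_pivot_columns[OF nf]
  by (intro finite_pd_if_truncated[OF fr s]) auto

lemma len_homology_eq_pos_mult:
  fixes D :: "nat \<Rightarrow> nat \<Rightarrow> nat \<Rightarrow> 'a::comm_ring_1" and sck :: "'a \<Rightarrow> 'k::ab_group_add \<Rightarrow> 'k"
    and act sc :: "'a \<Rightarrow> 'v::ab_group_add \<Rightarrow> 'v"
  assumes fr: "free_res smul g b D" and s: "1 \<le> s" and npd: "\<not> finite_pd smul"
    and k: "residual_action sck sck" "len 0 (+) sck {0} UNIV = 1"
    and R: "len 0 (+) ((*) :: 'a \<Rightarrow> 'a \<Rightarrow> 'a) {0} UNIV = enat LR"
    and act: "residual_action act sc" and N: "len 0 (+) sc {0} UNIV = enat N"
  shows "\<exists>h>0.
    len 0 (+) (vec_scale sck) (mv sck (D (Suc s)) (b s) (b (Suc s)) ` vecs (b (Suc s)))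
      {y \<in> vecs (b s). mv sck (D s) (b (s - 1)) (b s) y = 0} = enat h \<and>
    len 0 (+) (vec_scale sc) (mv act (D (Suc s)) (b s) (b (Suc s)) ` vecs (b (Suc s)))
      {y \<in> vecs (b s). mv act (D s) (b (s - 1)) (b s) y = 0} = enat (h * N)"
proof -
  obtain U Ui V Vi a1 where nf1: "normal_form (D s) (b (s - 1)) (b s) U Ui V Vi a1"
    using normal_form_exists by blast
  obtain U' Ui' V' Vi' a2 where nf2: "normal_form (D (Suc s)) (b s) (b (Suc s)) U' Ui' V' Vi' a2"
    using normal_form_exists by blast
  have k1: "len 0 (+) sck {0} UNIV = enat 1" using k(2) by (simp add: one_enat_def)
  note hk = len_homology_free_res[OF fr s k(1) nf1 nf2 k1]
  have "b s - a1 - a2 > 0"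
  proof (rule ccontr)
    assume "\<not> b s - a1 - a2 > 0"
    hence "a2 = b s - a1" using hk(2) by simp
    hence "len 0 (+) (vec_scale sck) {0} (mv sck (D (Suc s)) (b s) (b (Suc s)) ` vecs (b (Suc s)))
        = enat (b s - a1)"
      using len_image_normal_form[OF nf2 k(1)] k(2) by (simp add: of_nat_eq_enat)
    thus False using finite_pd_if_rank[OF fr s k R nf1] npd by blast
  qed
  thus ?thesis using hk(1) len_homology_free_res[OF fr s act nf1 nf2 N] by auto
qed

lemma tor_len_eq_len_homology:
  fixes act sc :: "'a::comm_ring_1 \<Rightarrow> 'n::ab_group_add \<Rightarrow> 'n"
  assumes "(SOME (g, b, D). free_res smul g b D) = (g, b, D)" and "1 \<le> s"
  shows "tor_len smul act sc s = len 0 (+) (vec_scale sc)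
    (mv act (D (Suc s)) (b s) (b (Suc s)) ` vecs (b (Suc s))) {y \<in> vecs (b s). mv act (D s) (b (s - 1)) (b s) y = 0}"
proof -
  have "(\<lambda>_. 0) = (0 :: nat \<Rightarrow> 'n)" "(\<lambda>x y j. x j + y j) = ((+) :: (nat \<Rightarrow> 'n) \<Rightarrow> _)"
    "(\<lambda>c (x :: nat \<Rightarrow> 'n) j. sc c (x j)) = vec_scale sc"
    by (simp_all add: fun_eq_iff vec_scale_def)
  thus ?thesis using assms by (simp add: tor_len_def Let_def)
qed

theorem proposition1p5:
  fixes p r :: nat
    and smul :: "'a::comm_ring_1 \<Rightarrow> 'm::ab_group_add \<Rightarrow> 'm"
    and sck :: "'a \<Rightarrow> 'k::ab_group_add \<Rightarrow> 'k"
    and \<pi> :: "'a \<Rightarrow> 'k"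
  assumes "prime p" and "CHAR('a) = p"
    and "local_ring TYPE('a)" and "artinian TYPE('a)"
    and "\<forall>x :: nat \<Rightarrow> 'a. (\<forall>i<p. x i \<in> maxideal) \<longrightarrow> (\<Prod>i<p. x i) = 0"
    and "module smul" and "mod_length smul \<noteq> \<infinity>" and "\<not> finite_pd smul"
    and "module sck"
    and "\<forall>x y. \<pi> (x + y) = \<pi> x + \<pi> y" and "\<forall>a x. \<pi> (a * x) = sck a (\<pi> x)"
    and "surj \<pi>" and "{x. \<pi> x = 0} = maxideal"
    and "r \<ge> 1"
  shows "mod_length ((*) :: 'a \<Rightarrow> 'a \<Rightarrow> 'a) < \<infinity> \<and>
    (\<lambda>s. real (the_enat (tor_len smul (frob_act p r) ((*) :: 'a \<Rightarrow> 'a \<Rightarrow> 'a) s))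
          / real (the_enat (tor_len smul sck sck s)))
      \<longlonglongrightarrow> real (the_enat (mod_length ((*) :: 'a \<Rightarrow> 'a \<Rightarrow> 'a)))"
proof -
  obtain LR where R: "len 0 (+) ((*) :: 'a \<Rightarrow> 'a \<Rightarrow> 'a) {0} UNIV = enat LR"
    using len_ring_finite[OF assms(4,5)] by auto
  have k: "residual_action sck sck" "len 0 (+) sck {0} UNIV = 1"
    using residual_action_residue_field[OF assms(9,11-13,3)] len_residue_field[OF assms(9,11-13)] by auto
  have frob: "residual_action (frob_act p r :: 'a \<Rightarrow> 'a \<Rightarrow> 'a) (*)"
    by (rule residual_action_frob_act[OF assms(1,2,14,5)])
  obtain g b D where gbD: "(SOME (g, b, D). free_res smul g b D) = (g, b, D)" by (metis prod_cases3)
  have "\<exists>g b D. free_res smul g b D"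
    using free_res_exists[OF assms(6)] assms(7) R by (simp add: mod_length_def)
  hence fr: "free_res smul g b D" using someI_ex[of "\<lambda>(g, b, D). free_res smul g b D"] gbD by auto
  have "real (the_enat (tor_len smul (frob_act p r) (*) s)) / real (the_enat (tor_len smul sck sck s)) = real LR"
    if "1 \<le> s" for s
    using len_homology_eq_pos_mult[OF fr that assms(8) k R frob R] by (auto simp: tor_len_eq_len_homology[OF gbD that])
  hence "\<forall>\<^sub>F s in sequentially.
      real (the_enat (tor_len smul (frob_act p r) (*) s)) / real (the_enat (tor_len smul sck sck s)) = real LR"
    by (rule eventually_sequentiallyI)
  thus ?thesis using tendsto_eventually R by (simp add: mod_length_def)
qed

end
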